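(* Let $T$ be a tree with $n$ vertices and matching number $\beta$. (i) If $0\leq \alpha< \frac{1}{2}$, then $$S_k(A_{\alpha}(T))\leq \begin{cases} \alpha(n+2k-2)+(1-2\alpha)\sqrt{k(n-1)}, & \text{if } 1\leq k \leq \beta;\\ \alpha(n+2k-2)+(1-2\alpha)\sqrt{\beta (n-1)}, & \text{if } \beta< k \leq n-\beta;\\ \alpha(n+2k-2)+(1-2\alpha)\sqrt{(n-k)(n-1)}, & \text{if } n-\beta< k \leq n. \end{cases}$$ (ii) If $\frac{1}{2} \leq \alpha<1$, then $S_k(A_{\alpha}(T))\leq \alpha(n+2k-2)$ for $1\leq k \leq n$.
   Context: $A_{\alpha}(G)=\alpha D(G)+(1-\alpha)A(G)$, where $A(G)$ is the adjacency matrix and $D(G)$ the diagonal degree matrix. For a real symmetric matrix $M$ with eigenvalues $\lambda_1(M)\geq\cdots\geq\lambda_n(M)$, $S_k(M)=\sum_{i=1}^k\lambda_i(M)$. The matching number is the maximum number of edges in a matching (set of pairwise disjoint edges). *)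

theory Defs
  imports "Jordan_Normal_Form.Char_Poly" "HOL-Library.Multiset"
begin

definition simple_graph :: "nat \<Rightarrow> (nat \<Rightarrow> nat \<Rightarrow> bool) \<Rightarrow> bool" where
  "simple_graph n E \<longleftrightarrow>
     (\<forall>u v. E u v \<longrightarrow> u < n \<and> v < n) \<and>
     (\<forall>u v. E u v \<longrightarrow> E v u) \<and>
     (\<forall>u. \<not> E u u)"

definition connected_graph :: "nat \<Rightarrow> (nat \<Rightarrow> nat \<Rightarrow> bool) \<Rightarrow> bool" where
  "connected_graph n E \<longleftrightarrow> (\<forall>u v. u < n \<longrightarrow> v < n \<longrightarrow> E\<^sup>*\<^sup>* u v)"

definition is_cycle :: "(nat \<Rightarrow> nat \<Rightarrow> bool) \<Rightarrow> nat list \<Rightarrow> bool" where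
  "is_cycle E vs \<longleftrightarrow>
     length vs \<ge> 3 \<and> distinct vs \<and>
     (\<forall>i. Suc i < length vs \<longrightarrow> E (vs ! i) (vs ! Suc i)) \<and>
     E (last vs) (hd vs)"

definition acyclic_graph :: "(nat \<Rightarrow> nat \<Rightarrow> bool) \<Rightarrow> bool" where
  "acyclic_graph E \<longleftrightarrow> (\<nexists>vs. is_cycle E vs)"

definition is_tree :: "nat \<Rightarrow> (nat \<Rightarrow> nat \<Rightarrow> bool) \<Rightarrow> bool" where
  "is_tree n E \<longleftrightarrow> n \<ge> 1 \<and> simple_graph n E \<and> connected_graph n E \<and> acyclic_graph E"

definition edge_set :: "nat \<Rightarrow> (nat \<Rightarrow> nat \<Rightarrow> bool) \<Rightarrow> nat set set" where
  "edge_set n E = {{u, v} | u v. u < n \<and> v < n \<and> E u v}"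

definition is_matching :: "nat \<Rightarrow> (nat \<Rightarrow> nat \<Rightarrow> bool) \<Rightarrow> nat set set \<Rightarrow> bool" where
  "is_matching n E M \<longleftrightarrow> M \<subseteq> edge_set n E \<and> pairwise disjnt M"

definition matching_number :: "nat \<Rightarrow> (nat \<Rightarrow> nat \<Rightarrow> bool) \<Rightarrow> nat" where
  "matching_number n E = Max {card M | M. is_matching n E M}"

definition degree :: "nat \<Rightarrow> (nat \<Rightarrow> nat \<Rightarrow> bool) \<Rightarrow> nat \<Rightarrow> nat" where
  "degree n E u = card {v. v < n \<and> E u v}"

definition adj_mat :: "nat \<Rightarrow> (nat \<Rightarrow> nat \<Rightarrow> bool) \<Rightarrow> real mat" where
  "adj_mat n E = mat n n (\<lambda>(i, j). if E i j then 1 else 0)"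

definition deg_mat :: "nat \<Rightarrow> (nat \<Rightarrow> nat \<Rightarrow> bool) \<Rightarrow> real mat" where
  "deg_mat n E = mat n n (\<lambda>(i, j). if i = j then real (degree n E i) else 0)"

definition A_alpha :: "real \<Rightarrow> nat \<Rightarrow> (nat \<Rightarrow> nat \<Rightarrow> bool) \<Rightarrow> real mat" where
  "A_alpha \<alpha> n E = \<alpha> \<cdot>\<^sub>m deg_mat n E + (1 - \<alpha>) \<cdot>\<^sub>m adj_mat n E"

text \<open>Eigenvalues (with multiplicity) of a real matrix, listed in non-increasing order:
the real roots of the characteristic polynomial counted with multiplicity.  For a real
symmetric matrix these are all n eigenvalues.\<close>
definition eigenvalues_desc :: "real mat \<Rightarrow> real list" where
  "eigenvalues_desc M = rev (sorted_list_of_multiset (proots (char_poly M)))"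

definition S_k :: "nat \<Rightarrow> real mat \<Rightarrow> real" where
  "S_k k M = sum_list (take k (eigenvalues_desc M))"

end

theory Submission
  imports Defs "Jordan_Normal_Form.Schur_Decomposition"
begin

(* S_k(A_alpha) is the trace of A_alpha against the orthogonal projection P onto the span of k
   orthonormal eigenvectors for the k largest eigenvalues, so it equals
   alpha tr(D P) + (1 - alpha) tr(A P).  The diagonal entries of P lie in [0, 1] and sum to k, so
   tr(D P) <= k + sum_x (d_x - 1) = n + k - 2.  For the signless Laplacian Q = D + A,
   Cauchy-Schwarz over neighbourhoods shows that an eigenvalue mu with unit eigenvector v satisfies
   mu <= 2 + mu sum_x v_x^2 (1 - 1/d_x); weighting these inequalities by the squared lengths of the
   projected eigenvectors gives tr(Q P) <= 2k + n - 2.  Finally tr(A P) = 2 sum_{edges} P_xy, and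
   Cauchy-Schwarz over the n - 1 edges reduces it to sums of squares: across a bipartition (X, Y)
   of the tree, sum_{x in X, y in Y} P_xy^2 <= k/4, which gives sqrt(k (n - 1)), and the same
   argument for I - P gives sqrt((n - k)(n - 1)); a vertex cover of size at most beta splits the
   edges into stars, each contributing at most sqrt(deg)/2, which gives sqrt(beta (n - 1)).
   Writing A_alpha = alpha Q + (1 - 2 alpha) A, respectively (1 - alpha) Q + (2 alpha - 1) D,
   combines these bounds. *)

lemma real_symmetric_complex_eigenvalue_real:
  fixes A :: "real mat"
  assumes A: "A \<in> carrier_mat n n" and sym: "transpose_mat A = A"
    and v: "v \<in> carrier_vec n" "v \<noteq> 0\<^sub>v n" and eigen: "map_mat complex_of_real A *\<^sub>v v = a \<cdot>\<^sub>v v"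
  shows "cnj a = a"
proof -
  have A_sym: "A $$ (j, i) = A $$ (i, j)" if "i < n" "j < n" for i j
    using arg_cong[OF sym, of "\<lambda>M. M $$ (i, j)"] that A by auto
  define s where "s = (\<Sum>i<n. \<Sum>j<n. cnj (v $ i) * complex_of_real (A $$ (i, j)) * v $ j)"
  define N where "N = (\<Sum>i<n. (cmod (v $ i))\<^sup>2)"
  have "cnj s = (\<Sum>i<n. \<Sum>j<n. v $ i * complex_of_real (A $$ (i, j)) * cnj (v $ j))"
    unfolding s_def by (simp add: cnj_sum)
  also have "\<dots> = (\<Sum>j<n. \<Sum>i<n. v $ i * complex_of_real (A $$ (i, j)) * cnj (v $ j))"
    by (rule sum.swap)
  also have "\<dots> = s"
    unfolding s_def by (intro sum.cong refl, subst A_sym) (auto simp: mult_ac)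
  finally have s_real: "cnj s = s" .
  have "s = (\<Sum>i<n. cnj (v $ i) * (map_mat complex_of_real A *\<^sub>v v) $ i)"
    unfolding s_def using A v(1)
    by (auto simp: scalar_prod_def sum_distrib_left mult.assoc intro!: sum.cong)
  also have "\<dots> = a * complex_of_real N"
    unfolding N_def eigen of_real_sum using v(1)
    by (auto simp: sum_distrib_left complex_norm_square[symmetric, unfolded of_real_power] mult_ac
      intro!: sum.cong)
  finally have s_eq: "s = a * complex_of_real N" .
  obtain i where i: "i < n" "v $ i \<noteq> 0"
  proof -
    have "\<not> (\<forall>i<n. v $ i = 0)"
      using v by (auto intro: eq_vecI)
    then show ?thesis using that by blast
  qed
  have "N > 0" unfolding N_def by (rule sum_pos2[of _ i]) (use i in auto)
  with s_real s_eq show "cnj a = a" by simp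
qed

lemma real_symmetric_has_eigenvalue:
  fixes A :: "real mat"
  assumes A: "A \<in> carrier_mat n n" and n: "n > 0" and sym: "transpose_mat A = A"
  shows "\<exists>e. eigenvalue A e"
proof -
  let ?C = "map_mat complex_of_real A"
  have C: "?C \<in> carrier_mat n n" using A by auto
  obtain as where cp: "char_poly ?C = (\<Prod>a\<leftarrow>as. [:- a, 1:])" and "length as = n"
    using char_poly_factorized[OF C] by blast
  then obtain a where "a \<in> set as" using n by (cases as) auto
  then have root: "poly (char_poly ?C) a = 0"
    unfolding cp by (induction as) (auto simp: poly_prod_list)
  then obtain v where "eigenvector ?C v a"
    using eigenvalue_root_char_poly[OF C] unfolding eigenvalue_def by blast
  then have "v \<in> carrier_vec n" "v \<noteq> 0\<^sub>v n" "?C *\<^sub>v v = a \<cdot>\<^sub>v v"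
    unfolding eigenvector_def using C by auto
  then have "cnj a = a" by (rule real_symmetric_complex_eigenvalue_real[OF A sym])
  then have "complex_of_real (Re a) = a" by (simp add: complex_eq_iff)
  with root have "poly (char_poly ?C) (complex_of_real (Re a)) = 0" by simp
  then have "complex_of_real (poly (char_poly A) (Re a)) = 0"
    unfolding of_real_hom.char_poly_hom[OF A] of_real_hom.poly_map_poly .
  then show ?thesis using eigenvalue_root_char_poly[OF A] by auto
qed

lemma index_mult_mat_sum:
  assumes "A \<in> carrier_mat n m" "B \<in> carrier_mat m p" "i < n" "j < p"
  shows "(A * B) $$ (i, j) = (\<Sum>l<m. A $$ (i, l) * B $$ (l, j))"
  using assms by (auto simp: scalar_prod_def lessThan_atLeast0 intro!: sum.cong)

locale orthogonal_mat =
  fixes n :: nat and U :: "real mat"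
  assumes carrier: "U \<in> carrier_mat n n"
    and left_inverse: "transpose_mat U * U = 1\<^sub>m n"
begin

lemma right_inverse: "U * transpose_mat U = 1\<^sub>m n"
  using mat_mult_left_right_inverse[OF _ carrier left_inverse] carrier by simp

lemma cols_orthonormal:
  "i < n \<Longrightarrow> j < n \<Longrightarrow> (\<Sum>x<n. U $$ (x, i) * U $$ (x, j)) = (if i = j then 1 else 0)"
  using index_mult_mat_sum[of "transpose_mat U" n n U n i j] carrier left_inverse by simp

lemma rows_orthonormal:
  "x < n \<Longrightarrow> y < n \<Longrightarrow> (\<Sum>i<n. U $$ (x, i) * U $$ (y, i)) = (if x = y then 1 else 0)"
  using index_mult_mat_sum[of U n n "transpose_mat U" n x y] carrier right_inverse by simp

lemma col_norm: "i < n \<Longrightarrow> (\<Sum>x<n. (U $$ (x, i))\<^sup>2) = 1"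
  using cols_orthonormal[of i i] by (simp add: power2_eq_square)

lemma parseval: "(\<Sum>i<n. (\<Sum>x<n. U $$ (x, i) * z x)\<^sup>2) = (\<Sum>x<n. (z x)\<^sup>2)"
proof -
  have "(\<Sum>i<n. (\<Sum>x<n. U $$ (x, i) * z x)\<^sup>2)
      = (\<Sum>i<n. \<Sum>x<n. \<Sum>y<n. (U $$ (x, i) * z x) * (U $$ (y, i) * z y))"
    by (simp only: power2_eq_square sum_product)
  also have "\<dots> = (\<Sum>x<n. \<Sum>i<n. \<Sum>y<n. (U $$ (x, i) * z x) * (U $$ (y, i) * z y))"
    by (rule sum.swap)
  also have "\<dots> = (\<Sum>x<n. \<Sum>y<n. \<Sum>i<n. (U $$ (x, i) * z x) * (U $$ (y, i) * z y))"
    by (rule sum.cong[OF refl], rule sum.swap)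
  also have "\<dots> = (\<Sum>x<n. \<Sum>y<n. z x * z y * (\<Sum>i<n. U $$ (x, i) * U $$ (y, i)))"
    by (intro sum.cong refl) (simp add: sum_distrib_left mult_ac)
  also have "\<dots> = (\<Sum>x<n. \<Sum>y<n. if x = y then z x * z y else 0)"
    by (intro sum.cong refl) (simp add: rows_orthonormal)
  also have "\<dots> = (\<Sum>x<n. (z x)\<^sup>2)"
    by (simp add: power2_eq_square)
  finally show ?thesis .
qed

lemma bessel:
  assumes "I \<subseteq> {..<n}"
  shows "(\<Sum>i\<in>I. (\<Sum>x<n. U $$ (x, i) * z x)\<^sup>2) \<le> (\<Sum>x<n. (z x)\<^sup>2)"
proof -
  have "(\<Sum>i\<in>I. (\<Sum>x<n. U $$ (x, i) * z x)\<^sup>2) \<le> (\<Sum>i<n. (\<Sum>x<n. U $$ (x, i) * z x)\<^sup>2)"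
    by (rule sum_mono2) (use assms in auto)
  then show ?thesis by (simp only: parseval)
qed

end

lemma orthogonal_mat_mult:
  assumes "orthogonal_mat n U" "orthogonal_mat n V"
  shows "orthogonal_mat n (U * V)"
proof
  interpret U: orthogonal_mat n U by fact
  interpret V: orthogonal_mat n V by fact
  show "U * V \<in> carrier_mat n n" using U.carrier V.carrier by simp
  have "transpose_mat (U * V) * (U * V) = transpose_mat V * (transpose_mat U * U) * V"
    using U.carrier V.carrier
    by (simp add: transpose_mult[of _ n n] assoc_mult_mat[of _ n n _ n _ n])
  also have "\<dots> = 1\<^sub>m n"
    using V.carrier by (simp add: U.left_inverse V.left_inverse)
  finally show "transpose_mat (U * V) * (U * V) = 1\<^sub>m n" .
qed

lemma orthogonal_mat_block:
  assumes "orthogonal_mat m U"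
  shows "orthogonal_mat (Suc m) (four_block_mat (1\<^sub>m 1) (0\<^sub>m 1 m) (0\<^sub>m m 1) U)"
    (is "orthogonal_mat _ ?B")
proof
  interpret orthogonal_mat m U by fact
  show "?B \<in> carrier_mat (Suc m) (Suc m)" using carrier by auto
  have BT: "transpose_mat ?B = four_block_mat (1\<^sub>m 1) (0\<^sub>m 1 m) (0\<^sub>m m 1) (transpose_mat U)"
    using carrier by (subst transpose_four_block_mat) auto
  show "transpose_mat ?B * ?B = 1\<^sub>m (Suc m)"
    unfolding BT using carrier
    by (subst mult_four_block_mat[of _ 1 1 _ m _ m _ _ 1 _ m]) (auto simp: left_inverse)
qed

lemma orthogonal_basis_extending:
  fixes v :: "real vec"
  assumes v: "v \<in> carrier_vec n" and v0: "v \<noteq> 0\<^sub>v n"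
  obtains ws where "set ws \<subseteq> carrier_vec n" "corthogonal ws" "length ws = n" "hd ws = v"
proof -
  interpret cof_vec_space n "TYPE(real)" .
  define b where "b = basis_completion v"
  from basis_completion[OF v v0, folded b_def]
  have dist: "distinct b" and indep: "\<not> lin_dep (set b)" and b: "set b \<subseteq> carrier_vec n"
    and hd_b: "hd b = v" and len_b: "length b = n" by auto
  have "n > 0" using v v0 by (cases n) auto
  then obtain vs where b_eq: "b = v # vs" using hd_b len_b by (cases b) auto
  define ws where "ws = gram_schmidt n b"
  from gram_schmidt_result[OF b dist indep ws_def]
  have "set ws \<subseteq> carrier_vec n" "corthogonal ws" "length ws = n"
    by (auto simp: len_b)
  moreover have "hd ws = v"
    using gram_schmidt_hd[OF v, of vs] unfolding ws_def b_eq .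
  ultimately show ?thesis by (rule that)
qed

lemma orthonormal_cols_of_corthogonal:
  fixes ws :: "real vec list"
  assumes ws: "set ws \<subseteq> carrier_vec n" "corthogonal ws" "length ws = n"
  obtains W where "orthogonal_mat n W" "\<And>j. j < n \<Longrightarrow> col W j = (1 / sqrt (ws ! j \<bullet> ws ! j)) \<cdot>\<^sub>v ws ! j"
proof -
  have wsi: "ws ! i \<in> carrier_vec n" if "i < n" for i using ws that by auto
  have orth: "ws ! i \<bullet> ws ! j = 0 \<longleftrightarrow> i \<noteq> j" if "i < n" "j < n" for i j
    using corthogonalD[OF ws(2), of i j] that ws(3) by simp
  have pos: "ws ! i \<bullet> ws ! i > 0" if "i < n" for i
  proof -
    have "ws ! i \<bullet> ws ! i \<ge> 0" by (simp add: scalar_prod_def sum_nonneg)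
    moreover have "ws ! i \<bullet> ws ! i \<noteq> 0" using orth[OF that that] by simp
    ultimately show ?thesis by simp
  qed
  define us where "us i = (1 / sqrt (ws ! i \<bullet> ws ! i)) \<cdot>\<^sub>v ws ! i" for i
  have us: "us i \<in> carrier_vec n" if "i < n" for i unfolding us_def using wsi[OF that] by simp
  have us_orth: "us i \<bullet> us j = (if i = j then 1 else 0)" if "i < n" "j < n" for i j
  proof -
    have "us i \<bullet> us j
        = (1 / sqrt (ws ! i \<bullet> ws ! i)) * (1 / sqrt (ws ! j \<bullet> ws ! j)) * (ws ! i \<bullet> ws ! j)"
      unfolding us_def using wsi[OF that(1)] wsi[OF that(2)] by simp
    also have "\<dots> = (if i = j then 1 else 0)"
    proof (cases "i = j")
      case True
      with pos[OF that(1)] show ?thesis by (simp add: field_simps real_sqrt_mult[symmetric])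
    next
      case False
      with orth[OF that] show ?thesis by simp
    qed
    finally show ?thesis .
  qed
  define W where "W = mat n n (\<lambda>(i, j). us j $ i)"
  have W: "W \<in> carrier_mat n n" unfolding W_def by simp
  have col_W: "col W j = us j" if "j < n" for j
    unfolding W_def using that us[OF that] by (intro eq_vecI) auto
  have "transpose_mat W * W = 1\<^sub>m n"
    by (rule eq_matI) (use W col_W us_orth in \<open>auto simp: row_transpose\<close>)
  with W have "orthogonal_mat n W" by unfold_locales
  then show ?thesis using that col_W unfolding us_def by blast
qed

lemma orthonormal_completion:
  fixes v :: "real vec"
  assumes v: "v \<in> carrier_vec n" and v1: "v \<bullet> v = 1"
  obtains W where "orthogonal_mat n W" "col W 0 = v"
proof -
  have v0: "v \<noteq> 0\<^sub>v n" using v1 v by auto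
  then obtain ws where ws: "set ws \<subseteq> carrier_vec n" "corthogonal ws" "length ws = n" "hd ws = v"
    using orthogonal_basis_extending[OF v] by blast
  obtain W where W: "orthogonal_mat n W"
    and col_W: "\<And>j. j < n \<Longrightarrow> col W j = (1 / sqrt (ws ! j \<bullet> ws ! j)) \<cdot>\<^sub>v ws ! j"
    using orthonormal_cols_of_corthogonal[OF ws(1-3)] by blast
  have n: "n > 0" using v0 v by (cases n) auto
  then have "ws ! 0 = v" using ws(3,4) by (cases ws) auto
  then have "col W 0 = v" using col_W[OF n] v1 by simp
  with W show ?thesis by (rule that)
qed

lemma unit_eigenvector:
  fixes A :: "real mat"
  assumes A: "A \<in> carrier_mat n n" and "eigenvalue A e"
  obtains v where "v \<in> carrier_vec n" "v \<bullet> v = 1" "A *\<^sub>v v = e \<cdot>\<^sub>v v"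
proof -
  obtain w where "eigenvector A w e" using assms(2) unfolding eigenvalue_def by blast
  then have w: "w \<in> carrier_vec n" "w \<noteq> 0\<^sub>v n" "A *\<^sub>v w = e \<cdot>\<^sub>v w"
    unfolding eigenvector_def using A by auto
  have ww: "w \<bullet> w > 0" using conjugate_square_greater_0_vec[OF w(1)] w(2) by simp
  define v where "v = (1 / sqrt (w \<bullet> w)) \<cdot>\<^sub>v w"
  have "v \<in> carrier_vec n" unfolding v_def using w by simp
  moreover have "v \<bullet> v = 1" unfolding v_def using w(1) ww
    by (simp add: field_simps real_sqrt_mult[symmetric])
  moreover have "A *\<^sub>v v = e \<cdot>\<^sub>v v" unfolding v_def using w A
    by (simp add: mult_mat_vec smult_smult_assoc mult.commute)
  ultimately show ?thesis by (rule that)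
qed

lemma congruence_symmetric:
  fixes A W :: "real mat"
  assumes A: "A \<in> carrier_mat n n" "transpose_mat A = A" and W: "W \<in> carrier_mat n n"
  shows "transpose_mat (transpose_mat W * A * W) = transpose_mat W * A * W"
proof -
  have "transpose_mat (transpose_mat W * A * W) = transpose_mat W * transpose_mat (transpose_mat W * A)"
    by (rule transpose_mult[of _ n n]) (use W A in auto)
  also have "transpose_mat (transpose_mat W * A) = A * W"
    by (subst transpose_mult[of _ n n]) (use W A in auto)
  also have "transpose_mat W * (A * W) = transpose_mat W * A * W"
    using W A by (simp add: assoc_mult_mat[of _ n n _ n _ n])
  finally show ?thesis .
qed

lemma (in orthogonal_mat) congruence_cancel:
  assumes "A \<in> carrier_mat n n"
  shows "U * (transpose_mat U * A * U) * transpose_mat U = A"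
proof -
  have "U * (transpose_mat U * A * U) * transpose_mat U = (U * transpose_mat U) * A * (U * transpose_mat U)"
    using carrier assms by (simp add: assoc_mult_mat[of _ n n _ n _ n])
  then show ?thesis unfolding right_inverse using assms by simp
qed

lemma (in orthogonal_mat) congruence_first_col:
  assumes A: "A \<in> carrier_mat n n" and n: "0 < n" and eigen: "A *\<^sub>v col U 0 = e \<cdot>\<^sub>v col U 0"
  shows "col (transpose_mat U * A * U) 0 = e \<cdot>\<^sub>v unit_vec n 0"
proof -
  have UT: "transpose_mat U \<in> carrier_mat n n" using carrier by simp
  have col_U0: "col U 0 \<in> carrier_vec n" using col_carrier_vec[OF n carrier] .
  have "col (transpose_mat U * A * U) 0 = (transpose_mat U * A) *\<^sub>v col U 0"
    by (rule col_mult2[of _ n n _ n]) (use carrier A n in auto)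
  also have "\<dots> = transpose_mat U *\<^sub>v (A *\<^sub>v col U 0)"
    by (rule assoc_mult_mat_vec[of _ n n _ n]) (use carrier A col_U0 in auto)
  also have "\<dots> = e \<cdot>\<^sub>v (transpose_mat U *\<^sub>v col U 0)"
    unfolding eigen using UT col_U0 by (simp add: mult_mat_vec)
  also have "transpose_mat U *\<^sub>v col U 0 = col (transpose_mat U * U) 0"
    by (rule col_mult2[symmetric, of _ n n _ n]) (use carrier UT n in auto)
  also have "\<dots> = unit_vec n 0" unfolding left_inverse using n by simp
  finally show ?thesis .
qed

lemma symmetric_first_col_block:
  fixes A :: "real mat"
  assumes A: "A \<in> carrier_mat (Suc m) (Suc m)" and sym: "transpose_mat A = A"
    and col0: "col A 0 = e \<cdot>\<^sub>v unit_vec (Suc m) 0"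
  obtains B where "B \<in> carrier_mat m m" "transpose_mat B = B"
    "A = four_block_mat (mat 1 1 (\<lambda>_. e)) (0\<^sub>m 1 m) (0\<^sub>m m 1) B"
proof -
  let ?n = "Suc m"
  have A_col0: "A $$ (i, 0) = (if i = 0 then e else 0)" if "i < ?n" for i
    using arg_cong[OF col0, of "\<lambda>x. x $ i"] that A by (auto simp: unit_vec_def)
  have A_row0: "A $$ (0, j) = (if j = 0 then e else 0)" if "j < ?n" for j
  proof -
    have "A $$ (0, j) = transpose_mat A $$ (0, j)" using sym by simp
    also have "\<dots> = A $$ (j, 0)" using A that by simp
    finally show ?thesis using A_col0[OF that] by simp
  qed
  define B where "B = mat m m (\<lambda>(i, j). A $$ (Suc i, Suc j))"
  have B: "B \<in> carrier_mat m m" unfolding B_def by simp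
  have "transpose_mat B = B"
  proof (rule eq_matI)
    fix i j assume ij: "i < dim_row B" "j < dim_col B"
    have "A $$ (Suc j, Suc i) = transpose_mat A $$ (Suc i, Suc j)"
      using ij A B by simp
    then show "transpose_mat B $$ (i, j) = B $$ (i, j)"
      using ij B sym by (simp add: B_def)
  qed (use B in auto)
  moreover have "A = four_block_mat (mat 1 1 (\<lambda>_. e)) (0\<^sub>m 1 m) (0\<^sub>m m 1) B"
  proof (rule eq_matI)
    fix i j assume "i < dim_row (four_block_mat (mat 1 1 (\<lambda>_. e)) (0\<^sub>m 1 m) (0\<^sub>m m 1) B)"
      "j < dim_col (four_block_mat (mat 1 1 (\<lambda>_. e)) (0\<^sub>m 1 m) (0\<^sub>m m 1) B)"
    then have ij: "i < ?n" "j < ?n" using B by auto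
    show "A $$ (i, j) = four_block_mat (mat 1 1 (\<lambda>_. e)) (0\<^sub>m 1 m) (0\<^sub>m m 1) B $$ (i, j)"
      using ij B A_col0[OF ij(1)] A_row0[OF ij(2)]
      by (cases i; cases j) (auto simp: B_def)
  qed (use A B in auto)
  ultimately show ?thesis using that B by blast
qed

lemma block_diag_congruence:
  fixes U D :: "real mat"
  assumes U: "U \<in> carrier_mat m m" and D: "D \<in> carrier_mat m m"
  defines "K \<equiv> four_block_mat (1\<^sub>m 1) (0\<^sub>m 1 m) (0\<^sub>m m 1) U"
  shows "K * four_block_mat (mat 1 1 (\<lambda>_. e)) (0\<^sub>m 1 m) (0\<^sub>m m 1) D * transpose_mat K
    = four_block_mat (mat 1 1 (\<lambda>_. e)) (0\<^sub>m 1 m) (0\<^sub>m m 1) (U * D * transpose_mat U)"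
proof -
  have KT: "transpose_mat K = four_block_mat (1\<^sub>m 1) (0\<^sub>m 1 m) (0\<^sub>m m 1) (transpose_mat U)"
    unfolding K_def using U by (subst transpose_four_block_mat) auto
  have KD: "K * four_block_mat (mat 1 1 (\<lambda>_. e)) (0\<^sub>m 1 m) (0\<^sub>m m 1) D
      = four_block_mat (mat 1 1 (\<lambda>_. e)) (0\<^sub>m 1 m) (0\<^sub>m m 1) (U * D)"
    unfolding K_def using U D by (subst mult_four_block_mat[of _ 1 1 _ m _ m _ _ 1 _ m]) auto
  show ?thesis
    unfolding KD KT using U D by (subst mult_four_block_mat[of _ 1 1 _ m _ m _ _ 1 _ m]) auto
qed

theorem real_symmetric_spectral:
  fixes A :: "real mat"
  assumes "A \<in> carrier_mat n n" "transpose_mat A = A"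
  shows "\<exists>U D. orthogonal_mat n U \<and> D \<in> carrier_mat n n \<and> diagonal_mat D \<and>
    A = U * D * transpose_mat U"
  using assms
proof (induction n arbitrary: A)
  case 0
  have "orthogonal_mat 0 (1\<^sub>m 0)" by unfold_locales auto
  then show ?case
    by (intro exI[of _ "1\<^sub>m 0"] exI[of _ "0\<^sub>m 0 0"])
      (use 0 in \<open>auto simp: diagonal_mat_def intro!: eq_matI\<close>)
next
  case (Suc m A)
  let ?n = "Suc m"
  note A = Suc.prems(1) and sym = Suc.prems(2)
  obtain e where "eigenvalue A e" using real_symmetric_has_eigenvalue[OF A _ sym] by auto
  then obtain v where v: "v \<in> carrier_vec ?n" "v \<bullet> v = 1" "A *\<^sub>v v = e \<cdot>\<^sub>v v"
    using unit_eigenvector[OF A] by blast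
  obtain W where W: "orthogonal_mat ?n W" and col_W: "col W 0 = v"
    using orthonormal_completion[OF v(1,2)] by blast
  interpret W: orthogonal_mat ?n W by fact
  let ?E = "mat 1 1 (\<lambda>_. e) :: real mat"
  have WAW_carrier: "transpose_mat W * A * W \<in> carrier_mat ?n ?n" using A W.carrier by simp
  have "col (transpose_mat W * A * W) 0 = e \<cdot>\<^sub>v unit_vec ?n 0"
    using W.congruence_first_col[OF A] v(3) col_W by simp
  then obtain B where B: "B \<in> carrier_mat m m" "transpose_mat B = B"
    and WAW: "transpose_mat W * A * W = four_block_mat ?E (0\<^sub>m 1 m) (0\<^sub>m m 1) B"
    using symmetric_first_col_block[OF WAW_carrier congruence_symmetric[OF A sym W.carrier]] by blast
  obtain U' D' where U': "orthogonal_mat m U'" and D': "D' \<in> carrier_mat m m" "diagonal_mat D'"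
    and B_eq: "B = U' * D' * transpose_mat U'"
    using Suc.IH[OF B] by blast
  define K where "K = four_block_mat (1\<^sub>m 1) (0\<^sub>m 1 m) (0\<^sub>m m 1) U'"
  define D where "D = four_block_mat ?E (0\<^sub>m 1 m) (0\<^sub>m m 1) D'"
  have K: "orthogonal_mat ?n K" unfolding K_def by (rule orthogonal_mat_block[OF U'])
  interpret K: orthogonal_mat ?n K by fact
  have D: "D \<in> carrier_mat ?n ?n" "diagonal_mat D"
    using D' unfolding D_def diagonal_mat_def by auto
  have KDK: "K * D * transpose_mat K = transpose_mat W * A * W"
    unfolding K_def D_def WAW B_eq
    by (rule block_diag_congruence[OF orthogonal_mat.carrier[OF U'] D'(1)])
  have "(W * K) * D * transpose_mat (W * K) = W * (K * D * transpose_mat K) * transpose_mat W"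
    using W.carrier K.carrier D
    by (simp add: transpose_mult[of _ ?n ?n] assoc_mult_mat[of _ ?n ?n _ ?n _ ?n])
  also have "\<dots> = A" unfolding KDK by (rule W.congruence_cancel[OF A])
  finally have "A = (W * K) * D * transpose_mat (W * K)" ..
  then show ?case using orthogonal_mat_mult[OF W K] D by blast
qed

lemma Cauchy_Schwarz_sum:
  fixes f g :: "'a \<Rightarrow> real"
  shows "(\<Sum>a\<in>A. f a * g a)\<^sup>2 \<le> (\<Sum>a\<in>A. (f a)\<^sup>2) * (\<Sum>a\<in>A. (g a)\<^sup>2)"
proof -
  have "0 \<le> (\<Sum>a\<in>A. \<Sum>b\<in>A. (f a * g b - f b * g a)\<^sup>2)" by (intro sum_nonneg) auto
  also have "\<dots> = (\<Sum>a\<in>A. \<Sum>b\<in>A. (f a)\<^sup>2 * (g b)\<^sup>2 + (f b)\<^sup>2 * (g a)\<^sup>2 - 2 * (f a * g a) * (f b * g b))"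
    by (intro sum.cong refl) (simp add: power2_eq_square algebra_simps)
  also have "\<dots> = (\<Sum>a\<in>A. \<Sum>b\<in>A. (f a)\<^sup>2 * (g b)\<^sup>2) + (\<Sum>a\<in>A. \<Sum>b\<in>A. (f b)\<^sup>2 * (g a)\<^sup>2)
      - 2 * (\<Sum>a\<in>A. \<Sum>b\<in>A. (f a * g a) * (f b * g b))"
    by (simp add: sum_subtractf sum.distrib sum_distrib_left mult.assoc)
  also have "(\<Sum>a\<in>A. \<Sum>b\<in>A. (f b)\<^sup>2 * (g a)\<^sup>2) = (\<Sum>a\<in>A. \<Sum>b\<in>A. (f a)\<^sup>2 * (g b)\<^sup>2)"
    by (subst sum.swap) (rule refl)
  finally show ?thesis by (simp add: sum_product power2_eq_square)
qed

lemma square_sum_le_card_sum_squares: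
  fixes f :: "'a \<Rightarrow> real"
  shows "(\<Sum>a\<in>A. f a)\<^sup>2 \<le> real (card A) * (\<Sum>a\<in>A. (f a)\<^sup>2)"
  using Cauchy_Schwarz_sum[of "\<lambda>_. 1" f A] by simp

lemma sum_swap_outer_inner:
  "(\<Sum>x\<in>A. \<Sum>y\<in>A. \<Sum>j\<in>B. \<Sum>i\<in>C. f x y j i) = (\<Sum>j\<in>B. \<Sum>i\<in>C. \<Sum>x\<in>A. \<Sum>y\<in>A. f x y j i)"
proof -
  have "(\<Sum>x\<in>A. \<Sum>y\<in>A. \<Sum>j\<in>B. \<Sum>i\<in>C. f x y j i) = (\<Sum>x\<in>A. \<Sum>j\<in>B. \<Sum>y\<in>A. \<Sum>i\<in>C. f x y j i)"
    by (rule sum.cong[OF refl], rule sum.swap)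
  also have "\<dots> = (\<Sum>j\<in>B. \<Sum>x\<in>A. \<Sum>y\<in>A. \<Sum>i\<in>C. f x y j i)" by (rule sum.swap)
  also have "\<dots> = (\<Sum>j\<in>B. \<Sum>x\<in>A. \<Sum>i\<in>C. \<Sum>y\<in>A. f x y j i)"
    by (rule sum.cong[OF refl], rule sum.cong[OF refl], rule sum.swap)
  also have "\<dots> = (\<Sum>j\<in>B. \<Sum>i\<in>C. \<Sum>x\<in>A. \<Sum>y\<in>A. f x y j i)"
    by (rule sum.cong[OF refl], rule sum.swap)
  finally show ?thesis .
qed

definition col_proj :: "real mat \<Rightarrow> nat set \<Rightarrow> nat \<Rightarrow> nat \<Rightarrow> real" where
  "col_proj U I x y = (\<Sum>i\<in>I. U $$ (x, i) * U $$ (y, i))"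

definition col_proj_trace :: "real mat \<Rightarrow> real mat \<Rightarrow> nat set \<Rightarrow> real" where
  "col_proj_trace M U I = (\<Sum>x<dim_row M. \<Sum>y<dim_row M. M $$ (x, y) * col_proj U I x y)"

lemma col_proj_sym: "col_proj U I x y = col_proj U I y x"
  unfolding col_proj_def by (simp add: mult.commute)

lemma col_proj_trace_lincomb:
  assumes "M \<in> carrier_mat n n" "N \<in> carrier_mat n n"
  shows "col_proj_trace (a \<cdot>\<^sub>m M + b \<cdot>\<^sub>m N) U I = a * col_proj_trace M U I + b * col_proj_trace N U I"
  using assms
  by (simp add: col_proj_trace_def algebra_simps sum.distrib sum_distrib_left)

lemma col_proj_trace_spectral:
  assumes M: "M \<in> carrier_mat n n"
    and spec: "\<And>x y. x < n \<Longrightarrow> y < n \<Longrightarrow> M $$ (x, y) = (\<Sum>j<n. V $$ (x, j) * \<mu> j * V $$ (y, j))"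
  shows "col_proj_trace M U I = (\<Sum>j<n. \<mu> j * (\<Sum>i\<in>I. (\<Sum>x<n. V $$ (x, j) * U $$ (x, i))\<^sup>2))"
proof -
  have entry: "M $$ (x, y) * col_proj U I x y
      = (\<Sum>j<n. \<Sum>i\<in>I. \<mu> j * ((V $$ (x, j) * U $$ (x, i)) * (V $$ (y, j) * U $$ (y, i))))"
    if "x < n" "y < n" for x y
    unfolding spec[OF that] col_proj_def sum_product by (intro sum.cong refl) (simp add: mult_ac)
  have "col_proj_trace M U I
      = (\<Sum>x<n. \<Sum>y<n. \<Sum>j<n. \<Sum>i\<in>I. \<mu> j * ((V $$ (x, j) * U $$ (x, i)) * (V $$ (y, j) * U $$ (y, i))))"
    unfolding col_proj_trace_def using M by (intro sum.cong) (auto simp: entry)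
  also have "\<dots> = (\<Sum>j<n. \<Sum>i\<in>I. \<Sum>x<n. \<Sum>y<n. \<mu> j * ((V $$ (x, j) * U $$ (x, i)) * (V $$ (y, j) * U $$ (y, i))))"
    by (rule sum_swap_outer_inner)
  also have "\<dots> = (\<Sum>j<n. \<mu> j * (\<Sum>i\<in>I. \<Sum>x<n. \<Sum>y<n. (V $$ (x, j) * U $$ (x, i)) * (V $$ (y, j) * U $$ (y, i))))"
    by (simp add: sum_distrib_left)
  also have "\<dots> = (\<Sum>j<n. \<mu> j * (\<Sum>i\<in>I. (\<Sum>x<n. V $$ (x, j) * U $$ (x, i))\<^sup>2))"
    by (simp only: power2_eq_square sum_product)
  finally show ?thesis .
qed

lemma spectral_weighted_diag:
  fixes M V :: "real mat"
  assumes spec: "\<And>x y. x < n \<Longrightarrow> y < n \<Longrightarrow> M $$ (x, y) = (\<Sum>j<n. V $$ (x, j) * \<mu> j * V $$ (y, j))"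
  shows "(\<Sum>j<n. \<mu> j * (\<Sum>x<n. (V $$ (x, j))\<^sup>2 * w x)) = (\<Sum>x<n. w x * M $$ (x, x))"
proof -
  have "(\<Sum>j<n. \<mu> j * (\<Sum>x<n. (V $$ (x, j))\<^sup>2 * w x))
      = (\<Sum>j<n. \<Sum>x<n. w x * (V $$ (x, j) * \<mu> j * V $$ (x, j)))"
    by (simp add: sum_distrib_left power2_eq_square mult_ac)
  also have "\<dots> = (\<Sum>x<n. \<Sum>j<n. w x * (V $$ (x, j) * \<mu> j * V $$ (x, j)))"
    by (rule sum.swap)
  also have "\<dots> = (\<Sum>x<n. w x * M $$ (x, x))"
    by (intro sum.cong refl) (simp add: spec sum_distrib_left)
  finally show ?thesis .
qed

context orthogonal_mat
begin

lemma col_proj_trace_eigenbasis: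
  assumes M: "M \<in> carrier_mat n n" and I: "I \<subseteq> {..<n}"
    and spec: "\<And>x y. x < n \<Longrightarrow> y < n \<Longrightarrow> M $$ (x, y) = (\<Sum>j<n. U $$ (x, j) * \<mu> j * U $$ (y, j))"
  shows "col_proj_trace M U I = (\<Sum>i\<in>I. \<mu> i)"
proof -
  have weight: "(\<Sum>i\<in>I. (\<Sum>x<n. U $$ (x, j) * U $$ (x, i))\<^sup>2) = (if j \<in> I then 1 else 0)"
    if "j < n" for j
  proof -
    have "(\<Sum>i\<in>I. (\<Sum>x<n. U $$ (x, j) * U $$ (x, i))\<^sup>2) = (\<Sum>i\<in>I. if j = i then 1 else 0)"
      using I that by (intro sum.cong refl) (auto simp: cols_orthonormal)
    also have "\<dots> = (if j \<in> I then 1 else 0)"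
      using finite_subset[OF I] by (simp add: sum.delta')
    finally show ?thesis .
  qed
  have "col_proj_trace M U I = (\<Sum>j<n. \<mu> j * (\<Sum>i\<in>I. (\<Sum>x<n. U $$ (x, j) * U $$ (x, i))\<^sup>2))"
    by (rule col_proj_trace_spectral[OF M spec])
  also have "\<dots> = (\<Sum>j<n. if j \<in> I then \<mu> j else 0)"
    by (intro sum.cong refl) (simp add: weight)
  also have "\<dots> = (\<Sum>i\<in>I. \<mu> i)"
    using I by (simp add: sum.If_cases Int_absorb1)
  finally show ?thesis .
qed

lemma spectral_entries:
  assumes D: "D \<in> carrier_mat n n" "diagonal_mat D" and A: "A = U * D * transpose_mat U"
    and x: "x < n" and y: "y < n"
  shows "A $$ (x, y) = (\<Sum>j<n. U $$ (x, j) * D $$ (j, j) * U $$ (y, j))"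
proof -
  have UD: "(U * D) $$ (x, j) = U $$ (x, j) * D $$ (j, j)" if "j < n" for j
  proof -
    have "(U * D) $$ (x, j) = (\<Sum>l<n. U $$ (x, l) * D $$ (l, j))"
      by (rule index_mult_mat_sum[OF carrier D(1) x that])
    also have "\<dots> = (\<Sum>l<n. if l = j then U $$ (x, j) * D $$ (j, j) else 0)"
      using D that unfolding diagonal_mat_def by (intro sum.cong refl) auto
    finally show ?thesis using that by simp
  qed
  have "A $$ (x, y) = (\<Sum>j<n. (U * D) $$ (x, j) * transpose_mat U $$ (j, y))"
    unfolding A using carrier D x y by (intro index_mult_mat_sum) auto
  also have "\<dots> = (\<Sum>j<n. U $$ (x, j) * D $$ (j, j) * U $$ (y, j))"
    using carrier y by (intro sum.cong refl) (auto simp: UD)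
  finally show ?thesis .
qed

lemma eigenvalues_desc_spectral:
  assumes A: "A \<in> carrier_mat n n" and D: "D \<in> carrier_mat n n" "diagonal_mat D"
    and A_eq: "A = U * D * transpose_mat U"
  shows "mset (eigenvalues_desc A) = mset (diag_mat D)"
proof -
  have "similar_mat_wit A D U (transpose_mat U)"
    unfolding similar_mat_wit_def Let_def using A D carrier left_inverse right_inverse A_eq by auto
  then have "char_poly A = char_poly D"
    by (intro char_poly_similar) (auto simp: similar_mat_def)
  also have "char_poly D = (\<Prod>a\<leftarrow>diag_mat D. [:- a, 1:])"
    by (rule char_poly_upper_triangular[OF D(1)])
      (use D in \<open>auto simp: upper_triangular_def diagonal_mat_def\<close>)
  finally have cp: "char_poly A = (\<Prod>a\<leftarrow>diag_mat D. [:- a, 1:])" .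
  have "proots (char_poly A) = (\<Sum>p\<leftarrow>map (\<lambda>a. [:- a, 1:]) (diag_mat D). proots p)"
    unfolding cp by (subst proots_prod_list[symmetric]) (auto simp: comp_def)
  also have "\<dots> = mset (diag_mat D)"
  proof -
    have "(\<Sum>p\<leftarrow>map (\<lambda>a. [:- a, 1:]) xs. proots p) = mset xs" for xs :: "real list"
      by (induction xs) auto
    then show ?thesis .
  qed
  finally show ?thesis unfolding eigenvalues_desc_def by simp
qed

end

lemma S_k_eq_col_proj_trace:
  fixes A :: "real mat"
  assumes A: "A \<in> carrier_mat n n" "transpose_mat A = A" and k: "k \<le> n"
  obtains U I where "orthogonal_mat n U" "I \<subseteq> {..<n}" "card I = k"
    "S_k k A = col_proj_trace A U I"
proof -
  obtain U D where U: "orthogonal_mat n U" and D: "D \<in> carrier_mat n n" "diagonal_mat D"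
    and A_eq: "A = U * D * transpose_mat U"
    using real_symmetric_spectral[OF A] by blast
  interpret orthogonal_mat n U by fact
  define ds where "ds = diag_mat D"
  have len_ds: "length ds = n" and ds_nth: "\<And>i. i < n \<Longrightarrow> ds ! i = D $$ (i, i)"
    unfolding ds_def diag_mat_def using D by auto
  obtain p where p: "p permutes {..<length ds}" "permute_list p ds = eigenvalues_desc A"
    using eigenvalues_desc_spectral[OF A(1) D A_eq] unfolding ds_def[symmetric]
    by (rule mset_eq_permutation)
  have len: "length (eigenvalues_desc A) = n" using p(2) len_ds by (metis length_permute_list)
  have nth: "eigenvalues_desc A ! j = ds ! p j" if "j < n" for j
    using p len_ds that by (metis permute_list_nth)
  define I where "I = p ` {..<k}"
  have inj: "inj_on p {..<k}" using permutes_inj[OF p(1)] by (simp add: inj_on_def inj_def)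
  have I: "I \<subseteq> {..<n}"
  proof
    fix i assume "i \<in> I"
    then obtain j where j: "j < k" "i = p j" unfolding I_def by auto
    then have "j \<in> {..<length ds}" using k len_ds by simp
    then have "p j \<in> {..<length ds}" using p(1) by (simp only: permutes_in_image)
    then show "i \<in> {..<n}" using j len_ds by simp
  qed
  have "S_k k A = (\<Sum>j<k. eigenvalues_desc A ! j)"
    unfolding S_k_def using k len by (simp add: sum_list_sum_nth min_def lessThan_atLeast0)
  also have "\<dots> = (\<Sum>j<k. ds ! p j)" using nth k by (intro sum.cong refl) auto
  also have "\<dots> = (\<Sum>i\<in>I. ds ! i)"
    unfolding I_def by (rule sum.reindex[OF inj, symmetric, unfolded comp_def])
  also have "\<dots> = (\<Sum>i\<in>I. D $$ (i, i))" using I ds_nth by (intro sum.cong refl) auto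
  also have "\<dots> = col_proj_trace A U I"
    using col_proj_trace_eigenbasis[OF A(1) I] spectral_entries[OF D A_eq] by simp
  finally show ?thesis
    using that[OF U I] card_image[OF inj] unfolding I_def by simp
qed

lemma col_proj_diag_nonneg: "0 \<le> col_proj U I x x"
  unfolding col_proj_def by (intro sum_nonneg) auto

lemma col_proj_block_trace_sq_le:
  assumes "finite I"
  shows "(\<Sum>x\<in>X. col_proj U I x x)\<^sup>2 \<le> real (card I) * (\<Sum>x\<in>X. \<Sum>y\<in>X. (col_proj U I x y)\<^sup>2)"
proof -
  define G where "G i j = (\<Sum>x\<in>X. U $$ (x, i) * U $$ (x, j))" for i j
  have "(\<Sum>x\<in>X. \<Sum>y\<in>X. (col_proj U I x y)\<^sup>2)
      = (\<Sum>x\<in>X. \<Sum>y\<in>X. \<Sum>i\<in>I. \<Sum>j\<in>I. (U $$ (x, i) * U $$ (x, j)) * (U $$ (y, i) * U $$ (y, j)))"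
    unfolding col_proj_def power2_eq_square sum_product by (intro sum.cong refl) (simp add: mult_ac)
  also have "\<dots> = (\<Sum>i\<in>I. \<Sum>j\<in>I. \<Sum>x\<in>X. \<Sum>y\<in>X. (U $$ (x, i) * U $$ (x, j)) * (U $$ (y, i) * U $$ (y, j)))"
    by (rule sum_swap_outer_inner)
  also have "\<dots> = (\<Sum>i\<in>I. \<Sum>j\<in>I. (G i j)\<^sup>2)"
    unfolding G_def power2_eq_square sum_product ..
  finally have W: "(\<Sum>x\<in>X. \<Sum>y\<in>X. (col_proj U I x y)\<^sup>2) = (\<Sum>i\<in>I. \<Sum>j\<in>I. (G i j)\<^sup>2)" .
  have "(\<Sum>x\<in>X. col_proj U I x x)\<^sup>2 = (\<Sum>i\<in>I. G i i)\<^sup>2"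
    unfolding G_def col_proj_def by (subst sum.swap) (rule refl)
  also have "\<dots> \<le> real (card I) * (\<Sum>i\<in>I. (G i i)\<^sup>2)"
    by (rule square_sum_le_card_sum_squares)
  also have "\<dots> \<le> real (card I) * (\<Sum>i\<in>I. \<Sum>j\<in>I. (G i j)\<^sup>2)"
    using assms by (intro mult_left_mono sum_mono member_le_sum) auto
  finally show ?thesis unfolding W .
qed

context orthogonal_mat
begin

lemma col_proj_diag_le_one:
  assumes "I \<subseteq> {..<n}" "x < n"
  shows "col_proj U I x x \<le> 1"
proof -
  have "col_proj U I x x \<le> (\<Sum>i<n. U $$ (x, i) * U $$ (x, i))"
    unfolding col_proj_def by (rule sum_mono2) (use assms in auto)
  then show ?thesis using rows_orthonormal[OF assms(2) assms(2)] by simp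
qed

lemma sum_col_proj_diag:
  assumes "I \<subseteq> {..<n}"
  shows "(\<Sum>x<n. col_proj U I x x) = real (card I)"
proof -
  have "(\<Sum>x<n. col_proj U I x x) = (\<Sum>i\<in>I. \<Sum>x<n. U $$ (x, i) * U $$ (x, i))"
    unfolding col_proj_def by (rule sum.swap)
  also have "\<dots> = (\<Sum>i\<in>I. 1)" using assms by (intro sum.cong refl) (auto simp: cols_orthonormal)
  finally show ?thesis by simp
qed

lemma sum_col_proj_sq:
  assumes I: "I \<subseteq> {..<n}" and x: "x < n"
  shows "(\<Sum>y<n. (col_proj U I x y)\<^sup>2) = col_proj U I x x"
proof -
  have "(\<Sum>y<n. (col_proj U I x y)\<^sup>2)
      = (\<Sum>y<n. \<Sum>i\<in>I. \<Sum>j\<in>I. (U $$ (x, i) * U $$ (y, i)) * (U $$ (x, j) * U $$ (y, j)))"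
    unfolding col_proj_def by (simp only: power2_eq_square sum_product)
  also have "\<dots> = (\<Sum>i\<in>I. \<Sum>y<n. \<Sum>j\<in>I. (U $$ (x, i) * U $$ (y, i)) * (U $$ (x, j) * U $$ (y, j)))"
    by (rule sum.swap)
  also have "\<dots> = (\<Sum>i\<in>I. \<Sum>j\<in>I. \<Sum>y<n. (U $$ (x, i) * U $$ (y, i)) * (U $$ (x, j) * U $$ (y, j)))"
    by (rule sum.cong[OF refl], rule sum.swap)
  also have "\<dots> = (\<Sum>i\<in>I. \<Sum>j\<in>I. U $$ (x, i) * U $$ (x, j) * (\<Sum>y<n. U $$ (y, i) * U $$ (y, j)))"
    by (intro sum.cong refl) (simp add: sum_distrib_left mult_ac)
  also have "\<dots> = (\<Sum>i\<in>I. \<Sum>j\<in>I. if i = j then U $$ (x, i) * U $$ (x, i) else 0)"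
    using I by (intro sum.cong refl) (simp add: cols_orthonormal subset_eq)
  also have "\<dots> = col_proj U I x x"
    unfolding col_proj_def using finite_subset[OF I] by simp
  finally show ?thesis .
qed

lemma col_proj_compl:
  assumes "I \<subseteq> {..<n}" "x < n" "y < n" "x \<noteq> y"
  shows "col_proj U ({..<n} - I) x y = - col_proj U I x y"
proof -
  have "col_proj U I x y + col_proj U ({..<n} - I) x y = (\<Sum>i<n. U $$ (x, i) * U $$ (y, i))"
    unfolding col_proj_def using assms(1) by (subst sum.subset_diff[of I "{..<n}"]) auto
  also have "\<dots> = 0" using rows_orthonormal[OF assms(2,3)] assms(4) by simp
  finally show ?thesis by simp
qed

text \<open>With \<open>P = col_proj U I\<close>, the left-hand side is \<open>t - W\<close> for \<open>t = (\<Sum>x\<in>X. P x x)\<close> and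
  \<open>W = (\<Sum>x\<in>X. \<Sum>y\<in>X. (P x y)\<^sup>2)\<close>, and \<open>t\<^sup>2 \<le> card I * W\<close>.\<close>
lemma col_proj_cut_le:
  assumes I: "I \<subseteq> {..<n}" and X: "X \<subseteq> {..<n}"
  shows "(\<Sum>x\<in>X. \<Sum>y\<in>{..<n} - X. (col_proj U I x y)\<^sup>2) \<le> real (card I) / 4"
proof -
  define t where "t = (\<Sum>x\<in>X. col_proj U I x x)"
  define W where "W = (\<Sum>x\<in>X. \<Sum>y\<in>X. (col_proj U I x y)\<^sup>2)"
  define c where "c = real (card I)"
  have row: "(\<Sum>y\<in>{..<n} - X. (col_proj U I x y)\<^sup>2) = col_proj U I x x - (\<Sum>y\<in>X. (col_proj U I x y)\<^sup>2)"
    if "x \<in> X" for x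
    using sum_col_proj_sq[OF I, of x] sum.subset_diff[OF X, of "\<lambda>y. (col_proj U I x y)\<^sup>2"] that X
    by auto
  have lhs: "(\<Sum>x\<in>X. \<Sum>y\<in>{..<n} - X. (col_proj U I x y)\<^sup>2) = t - W"
    unfolding t_def W_def by (simp add: row sum_subtractf)
  have "t\<^sup>2 \<le> c * W"
    unfolding t_def W_def c_def by (rule col_proj_block_trace_sq_le[OF finite_subset[OF I]]) simp
  moreover have "c * t - t\<^sup>2 \<le> c\<^sup>2 / 4"
    using zero_le_power2[of "c / 2 - t"] by (simp add: power2_eq_square algebra_simps)
  ultimately have main: "c * (t - W) \<le> c * (c / 4)"
    by (simp add: right_diff_distrib power2_eq_square)
  show ?thesis
  proof (cases "c = 0")
    case True
    then have "I = {}" unfolding c_def using finite_subset[OF I] by simp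
    then show ?thesis unfolding lhs t_def W_def col_proj_def by simp
  next
    case False
    then have "c > 0" unfolding c_def by simp
    with main have "t - W \<le> c / 4" by (simp only: mult_le_cancel_left_pos)
    then show ?thesis unfolding lhs c_def .
  qed
qed

lemma bessel_polarization:
  assumes "I \<subseteq> {..<n}"
  shows "4 * (\<Sum>i\<in>I. (\<Sum>x<n. U $$ (x, i) * z x) * (\<Sum>x<n. U $$ (x, i) * w x))
    \<le> (\<Sum>x<n. (z x + w x)\<^sup>2)"
proof -
  define a where "a i = (\<Sum>x<n. U $$ (x, i) * z x)" for i
  define b where "b i = (\<Sum>x<n. U $$ (x, i) * w x)" for i
  have "(\<Sum>i\<in>I. (a i + b i)\<^sup>2) \<le> (\<Sum>x<n. (z x + w x)\<^sup>2)"
    using bessel[OF assms, of "\<lambda>x. z x + w x"]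
    by (simp add: a_def b_def distrib_left sum.distrib)
  moreover have "0 \<le> (\<Sum>i\<in>I. (a i - b i)\<^sup>2)" by (intro sum_nonneg) auto
  moreover have "(\<Sum>i\<in>I. (a i + b i)\<^sup>2) - (\<Sum>i\<in>I. (a i - b i)\<^sup>2) = 4 * (\<Sum>i\<in>I. a i * b i)"
  proof -
    have "(\<Sum>i\<in>I. (a i + b i)\<^sup>2) - (\<Sum>i\<in>I. (a i - b i)\<^sup>2) = (\<Sum>i\<in>I. (a i + b i)\<^sup>2 - (a i - b i)\<^sup>2)"
      by (simp add: sum_subtractf)
    also have "\<dots> = (\<Sum>i\<in>I. 4 * (a i * b i))"
      by (intro sum.cong refl) (simp add: power2_eq_square algebra_simps)
    finally show ?thesis by (simp add: sum_distrib_left)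
  qed
  ultimately show ?thesis unfolding a_def b_def by linarith
qed

text \<open>Polarization with \<open>z = sqrt (card N) \<cdot> e\<^sub>c\<close> and \<open>w = 1\<^sub>N\<close>.\<close>
lemma col_proj_star_le:
  assumes I: "I \<subseteq> {..<n}" and c: "c < n" and N: "N \<subseteq> {..<n}" "c \<notin> N"
  shows "2 * (\<Sum>y\<in>N. col_proj U I c y) \<le> sqrt (real (card N))"
proof -
  define s where "s = sqrt (real (card N))"
  have s: "s \<ge> 0" "s * s = real (card N)" unfolding s_def by auto
  define z where "z x = (if x = c then s else 0)" for x
  define w where "w x = (if x \<in> N then 1 else (0::real))" for x
  have Uz: "(\<Sum>x<n. U $$ (x, i) * z x) = s * U $$ (c, i)" for i
    unfolding z_def using c by (simp add: if_distrib[of "\<lambda>t. _ * t"] sum.delta' cong: if_cong)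
  have Uw: "(\<Sum>x<n. U $$ (x, i) * w x) = (\<Sum>y\<in>N. U $$ (y, i))" for i
    unfolding w_def using N(1) by (simp add: if_distrib[of "\<lambda>t. _ * t"] sum.If_cases Int_absorb1 cong: if_cong)
  have "(\<Sum>x<n. (z x + w x)\<^sup>2) = (\<Sum>x<n. (if x = c then s * s else 0) + (if x \<in> N then 1 else 0))"
    unfolding z_def w_def using N(2) by (intro sum.cong refl) (auto simp: power2_eq_square)
  also have "\<dots> = 2 * (s * s)"
    using c N(1) s by (simp add: sum.distrib sum.If_cases Int_absorb1)
  finally have norm: "(\<Sum>x<n. (z x + w x)\<^sup>2) = 2 * (s * s)" .
  have "(\<Sum>i\<in>I. (\<Sum>x<n. U $$ (x, i) * z x) * (\<Sum>x<n. U $$ (x, i) * w x))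
      = s * (\<Sum>y\<in>N. col_proj U I c y)"
    unfolding Uz Uw col_proj_def
    by (simp add: sum_distrib_left sum.swap[of _ I N] mult_ac)
  with bessel_polarization[OF I, of z w] norm
  have le: "s * (2 * (\<Sum>y\<in>N. col_proj U I c y)) \<le> s * s" by simp
  show ?thesis
  proof (cases "N = {}")
    case False
    then have "s > 0" using finite_subset[OF N(1)] unfolding s_def by (simp add: card_gt_0_iff)
    with le show ?thesis unfolding s_def[symmetric] by (simp add: mult_le_cancel_left_pos)
  qed simp
qed

lemma spectral_eigenvector:
  assumes spec: "\<And>x y. x < n \<Longrightarrow> y < n \<Longrightarrow> M $$ (x, y) = (\<Sum>l<n. U $$ (x, l) * \<mu> l * U $$ (y, l))"
    and x: "x < n" and j: "j < n"
  shows "(\<Sum>y<n. M $$ (x, y) * U $$ (y, j)) = \<mu> j * U $$ (x, j)"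
proof -
  have "(\<Sum>y<n. M $$ (x, y) * U $$ (y, j)) = (\<Sum>y<n. \<Sum>l<n. U $$ (x, l) * \<mu> l * (U $$ (y, l) * U $$ (y, j)))"
    using x by (intro sum.cong refl) (simp add: spec sum_distrib_left sum_distrib_right mult_ac)
  also have "\<dots> = (\<Sum>l<n. U $$ (x, l) * \<mu> l * (\<Sum>y<n. U $$ (y, l) * U $$ (y, j)))"
    by (subst sum.swap) (simp add: sum_distrib_left)
  also have "\<dots> = (\<Sum>l<n. if l = j then U $$ (x, l) * \<mu> l else 0)"
    using j by (intro sum.cong refl) (simp add: cols_orthonormal)
  finally show ?thesis using j by simp
qed

end

lemma col_proj_trace_le_eigen_bound:
  assumes U: "orthogonal_mat n U" and V: "orthogonal_mat n V" and I: "I \<subseteq> {..<n}"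
    and M: "M \<in> carrier_mat n n"
    and spec: "\<And>x y. x < n \<Longrightarrow> y < n \<Longrightarrow> M $$ (x, y) = (\<Sum>j<n. V $$ (x, j) * \<mu> j * V $$ (y, j))"
    and bound: "\<And>j. j < n \<Longrightarrow> \<mu> j \<le> c + R j" and R: "\<And>j. j < n \<Longrightarrow> 0 \<le> R j"
  shows "col_proj_trace M U I \<le> c * real (card I) + (\<Sum>j<n. R j)"
proof -
  interpret U: orthogonal_mat n U by fact
  interpret V: orthogonal_mat n V by fact
  define w where "w j = (\<Sum>i\<in>I. (\<Sum>x<n. V $$ (x, j) * U $$ (x, i))\<^sup>2)" for j
  have w_le: "w j \<le> 1" if "j < n" for j
    using U.bessel[OF I, of "\<lambda>x. V $$ (x, j)"] V.col_norm[OF that]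
    unfolding w_def by (simp add: mult.commute)
  have w_sum: "(\<Sum>j<n. w j) = real (card I)"
  proof -
    have "(\<Sum>j<n. w j) = (\<Sum>i\<in>I. \<Sum>j<n. (\<Sum>x<n. V $$ (x, j) * U $$ (x, i))\<^sup>2)"
      unfolding w_def by (rule sum.swap)
    also have "\<dots> = (\<Sum>i\<in>I. 1)"
      using I by (intro sum.cong refl) (auto simp: V.parseval U.col_norm)
    finally show ?thesis by simp
  qed
  have "col_proj_trace M U I = (\<Sum>j<n. \<mu> j * w j)"
    unfolding w_def by (rule col_proj_trace_spectral[OF M spec])
  also have "\<dots> \<le> (\<Sum>j<n. c * w j + R j)"
  proof (rule sum_mono)
    fix j assume "j \<in> {..<n}"
    then have j: "j < n" by simp
    have "w j \<ge> 0" unfolding w_def by (intro sum_nonneg) auto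
    then have "\<mu> j * w j \<le> (c + R j) * w j" using bound[OF j] by (rule mult_right_mono[rotated])
    also have "\<dots> \<le> c * w j + R j"
      using R[OF j] w_le[OF j] by (simp add: distrib_right mult_left_le)
    finally show "\<mu> j * w j \<le> c * w j + R j" .
  qed
  also have "\<dots> = c * real (card I) + (\<Sum>j<n. R j)"
    by (simp add: sum.distrib w_sum flip: sum_distrib_left)
  finally show ?thesis .
qed

definition simple_path :: "(nat \<Rightarrow> nat \<Rightarrow> bool) \<Rightarrow> nat set \<Rightarrow> nat list \<Rightarrow> bool" where
  "simple_path E S vs \<longleftrightarrow> distinct vs \<and> set vs \<subseteq> S \<and>
     (\<forall>i. Suc i < length vs \<longrightarrow> E (vs ! i) (vs ! Suc i))"

lemma simple_path_snoc:
  assumes vs: "simple_path E S vs" "vs \<noteq> []" and q: "q \<in> S" "q \<notin> set vs" "E (last vs) q"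
  shows "simple_path E S (vs @ [q])"
  unfolding simple_path_def
proof (intro conjI allI impI)
  show "distinct (vs @ [q])" "set (vs @ [q]) \<subseteq> S" using vs q by (auto simp: simple_path_def)
  fix i assume i: "Suc i < length (vs @ [q])"
  show "E ((vs @ [q]) ! i) ((vs @ [q]) ! Suc i)"
  proof (cases "Suc i < length vs")
    case True
    then show ?thesis using vs(1) by (simp add: nth_append simple_path_def)
  next
    case False
    then have "i = length vs - 1" "Suc (length vs - 1) = length vs" using i vs(2) by auto
    then show ?thesis using vs(2) q(3) by (simp add: nth_append last_conv_nth)
  qed
qed

locale forest =
  fixes E :: "nat \<Rightarrow> nat \<Rightarrow> bool"
  assumes sym: "E u v \<Longrightarrow> E v u" and irrefl: "\<not> E u u" and acyclic: "acyclic_graph E"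
begin

lemma simple_path_no_chord:
  assumes vs: "simple_path E S vs" and i: "Suc (Suc i) < length vs"
  shows "\<not> E (last vs) (vs ! i)"
proof
  assume chord: "E (last vs) (vs ! i)"
  have "is_cycle E (drop i vs)"
    unfolding is_cycle_def
  proof (intro conjI allI impI)
    show "3 \<le> length (drop i vs)" "distinct (drop i vs)" using i vs by (auto simp: simple_path_def)
    show "E (drop i vs ! j) (drop i vs ! Suc j)" if "Suc j < length (drop i vs)" for j
      using vs that unfolding simple_path_def by (auto simp: add.commute[of i])
    show "E (last (drop i vs)) (hd (drop i vs))"
      using chord i by (simp add: hd_drop_conv_nth)
  qed
  then show False using acyclic unfolding acyclic_graph_def by blast
qed

text \<open>The end of a longest path in \<open>S\<close> is a leaf of the subgraph induced by \<open>S\<close>.\<close>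
lemma leaf_exists:
  assumes S: "finite S" and xy: "x \<in> S" "y \<in> S" "E x y"
  obtains l p where "l \<in> S" "p \<in> S" "E l p" "l \<noteq> p" "\<And>q. q \<in> S \<Longrightarrow> E l q \<Longrightarrow> q = p"
proof -
  let ?P = "\<lambda>L. \<exists>vs. simple_path E S vs \<and> length vs = L"
  have P2: "?P 2"
    using xy irrefl[of x] by (intro exI[of _ "[x, y]"]) (auto simp: simple_path_def nth_Cons')
  have bound: "\<forall>L. ?P L \<longrightarrow> L \<le> card S"
    using S unfolding simple_path_def by (metis card_mono distinct_card)
  obtain L where PL: "?P L" and max: "\<forall>L'. ?P L' \<longrightarrow> L' \<le> L"
    using Nat.ex_has_greatest_nat[of ?P 2 "card S", OF P2 bound] by blast
  have L: "2 \<le> L" using max P2 by blast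
  from PL obtain vs where vs: "simple_path E S vs" "length vs = L" by blast
  have set_vs: "set vs \<subseteq> S" and adj: "\<And>i. Suc i < L \<Longrightarrow> E (vs ! i) (vs ! Suc i)"
    using vs unfolding simple_path_def by auto
  define l where "l = vs ! (L - 1)"
  define p where "p = vs ! (L - 2)"
  have last_vs: "last vs = l" unfolding l_def using L vs(2) by (cases vs) (auto simp: last_conv_nth)
  have "l \<in> S" "p \<in> S" unfolding l_def p_def using L vs(2) set_vs by auto
  have "E p l" unfolding p_def l_def using adj[of "L - 2"] L by (simp add: Suc_diff_Suc numeral_2_eq_2)
  then have "E l p" by (rule sym)
  have "q = p" if q: "q \<in> S" "E l q" for q
  proof (cases "q \<in> set vs")
    case False
    have "vs \<noteq> []" using vs(2) L by auto
    then have "simple_path E S (vs @ [q])"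
      using simple_path_snoc[OF vs(1) _ q(1) False] q(2) last_vs by simp
    then show ?thesis using vs(2) max by fastforce
  next
    case True
    then obtain i where i: "i < L" "q = vs ! i" using vs(2) by (auto simp: in_set_conv_nth)
    have "i \<noteq> L - 1" using q(2) irrefl i unfolding l_def by auto
    moreover have "\<not> Suc (Suc i) < L"
      using simple_path_no_chord[OF vs(1)] q(2) i vs(2) last_vs by auto
    ultimately have "i = L - 2" using i(1) by linarith
    then show ?thesis using i(2) unfolding p_def by simp
  qed
  moreover have "l \<noteq> p" using \<open>E l p\<close> irrefl by auto
  ultimately show ?thesis using that \<open>l \<in> S\<close> \<open>p \<in> S\<close> \<open>E l p\<close> by blast
qed

lemma card_arcs_within:
  assumes "finite S" "S \<noteq> {}"
  shows "card {(u, v). u \<in> S \<and> v \<in> S \<and> E u v} + 2 \<le> 2 * card S"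
  using assms
proof (induction "card S" arbitrary: S rule: less_induct)
  case less
  let ?A = "\<lambda>S. {(u, v). u \<in> S \<and> v \<in> S \<and> E u v}"
  show ?case
  proof (cases "\<exists>x\<in>S. \<exists>y\<in>S. E x y")
    case False
    then have empty: "?A S = {}" by auto
    have "card S \<ge> 1" using less.prems by (simp add: Suc_leI card_gt_0_iff)
    then show ?thesis unfolding empty by simp
  next
    case True
    then obtain l p where lp: "l \<in> S" "p \<in> S" "E l p" "l \<noteq> p"
      and leaf: "\<And>q. q \<in> S \<Longrightarrow> E l q \<Longrightarrow> q = p"
      using leaf_exists[OF less.prems(1)] by blast
    define S' where "S' = S - {l}"
    have S': "finite S'" "S' \<noteq> {}" "card S = Suc (card S')"
      using less.prems lp unfolding S'_def by (auto simp: card_gt_0_iff)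
    have IH: "card (?A S') + 2 \<le> 2 * card S'"
      using less.hyps[of S'] S' by simp
    have "?A S = insert (l, p) (insert (p, l) (?A S'))"
    proof
      show "?A S \<subseteq> insert (l, p) (insert (p, l) (?A S'))"
        using leaf sym unfolding S'_def by blast
      show "insert (l, p) (insert (p, l) (?A S')) \<subseteq> ?A S"
        using lp sym unfolding S'_def by blast
    qed
    moreover have "(l, p) \<notin> ?A S'" "(p, l) \<notin> ?A S'" "(l, p) \<noteq> (p, l)"
      using lp unfolding S'_def by auto
    moreover have "finite (?A S')"
      by (rule finite_subset[of _ "S' \<times> S'"]) (use S' in auto)
    ultimately have "card (?A S) = card (?A S') + 2" by simp
    then show ?thesis using IH S'(3) by simp
  qed
qed

lemma bipartition:
  assumes "finite S"
  shows "\<exists>X. \<forall>u\<in>S. \<forall>v\<in>S. E u v \<longrightarrow> (u \<in> X \<longleftrightarrow> v \<notin> X)"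
  using assms
proof (induction "card S" arbitrary: S rule: less_induct)
  case less
  show ?case
  proof (cases "\<exists>x\<in>S. \<exists>y\<in>S. E x y")
    case False
    then show ?thesis by blast
  next
    case True
    then obtain l p where lp: "l \<in> S" "p \<in> S" "E l p" "l \<noteq> p"
      and leaf: "\<And>q. q \<in> S \<Longrightarrow> E l q \<Longrightarrow> q = p"
      using leaf_exists[OF less.prems] by blast
    have "card (S - {l}) < card S" using less.prems lp(1) by (meson card_Diff1_less)
    then obtain X where X: "\<forall>u\<in>S - {l}. \<forall>v\<in>S - {l}. E u v \<longrightarrow> (u \<in> X \<longleftrightarrow> v \<notin> X)"
      using less.hyps[of "S - {l}"] less.prems by auto
    define X' where "X' = (if p \<in> X then X - {l} else insert l X)"
    have "u \<in> X' \<longleftrightarrow> v \<notin> X'" if uv: "u \<in> S" "v \<in> S" "E u v" for u v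
    proof (cases "u = l \<or> v = l")
      case True
      then consider "u = l" "v = p" | "v = l" "u = p"
        using leaf uv sym by blast
      then show ?thesis using lp(4) unfolding X'_def by cases auto
    next
      case False
      then show ?thesis using X uv unfolding X'_def by auto
    qed
    then show ?thesis by blast
  qed
qed

lemma cover_insert_leaf_neighbour:
  assumes C: "\<forall>u\<in>S - {l, p}. \<forall>v\<in>S - {l, p}. E u v \<longrightarrow> u \<in> C \<or> v \<in> C"
    and leaf: "\<And>q. q \<in> S \<Longrightarrow> E l q \<Longrightarrow> q = p"
  shows "\<forall>u\<in>S. \<forall>v\<in>S. E u v \<longrightarrow> u \<in> insert p C \<or> v \<in> insert p C"
proof (intro ballI impI)
  fix u v assume uv: "u \<in> S" "v \<in> S" "E u v"
  show "u \<in> insert p C \<or> v \<in> insert p C"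
  proof (cases "u \<in> {l, p} \<or> v \<in> {l, p}")
    case True
    then show ?thesis using leaf uv sym by blast
  next
    case False
    then show ?thesis using C uv by auto
  qed
qed

lemma matching_insert_edge:
  assumes M: "M \<subseteq> {{u, v} | u v. u \<in> S \<and> v \<in> S \<and> E u v}" "pairwise disjnt M" "finite M"
    and lp: "l \<notin> S" "p \<notin> S"
  shows "pairwise disjnt (insert {l, p} M)" "card (insert {l, p} M) = Suc (card M)"
proof -
  have "disjnt {l, p} e" if "e \<in> M" for e
    using M(1) that lp unfolding disjnt_def by blast
  then show "pairwise disjnt (insert {l, p} M)"
    using M(2) unfolding pairwise_insert by (auto intro: disjnt_sym)
  have "{l, p} \<notin> M"
  proof
    assume "{l, p} \<in> M"
    then obtain u v where "{l, p} = {u, v}" "u \<in> S" "v \<in> S" using M(1) by blast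
    then have "l \<in> S" by (auto simp: doubleton_eq_iff)
    with lp show False by simp
  qed
  then show "card (insert {l, p} M) = Suc (card M)" using M(3) by simp
qed

text \<open>Removing a leaf together with its neighbour puts the neighbour into the cover and the
  leaf edge into the matching.\<close>
lemma vertex_cover_le_matching:
  assumes "finite S"
  shows "\<exists>C M. C \<subseteq> S \<and> (\<forall>u\<in>S. \<forall>v\<in>S. E u v \<longrightarrow> u \<in> C \<or> v \<in> C) \<and>
    M \<subseteq> {{u, v} | u v. u \<in> S \<and> v \<in> S \<and> E u v} \<and> pairwise disjnt M \<and> finite M \<and>
    card C \<le> card M"
  using assms
proof (induction "card S" arbitrary: S rule: less_induct)
  case less
  show ?case
  proof (cases "\<exists>x\<in>S. \<exists>y\<in>S. E x y")
    case False
    then show ?thesis by (intro exI[of _ "{}"]) auto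
  next
    case True
    then obtain l p where lp: "l \<in> S" "p \<in> S" "E l p" "l \<noteq> p"
      and leaf: "\<And>q. q \<in> S \<Longrightarrow> E l q \<Longrightarrow> q = p"
      using leaf_exists[OF less.prems] by blast
    define S' where "S' = S - {l, p}"
    have "card S' < card S" unfolding S'_def using less.prems lp(1)
      by (intro psubset_card_mono) auto
    moreover have "finite S'" unfolding S'_def using less.prems by simp
    ultimately have "\<exists>C M. C \<subseteq> S' \<and> (\<forall>u\<in>S'. \<forall>v\<in>S'. E u v \<longrightarrow> u \<in> C \<or> v \<in> C) \<and>
      M \<subseteq> {{u, v} | u v. u \<in> S' \<and> v \<in> S' \<and> E u v} \<and> pairwise disjnt M \<and> finite M \<and>
      card C \<le> card M"
      by (rule less.hyps)
    then obtain C M where C: "C \<subseteq> S'" "\<forall>u\<in>S'. \<forall>v\<in>S'. E u v \<longrightarrow> u \<in> C \<or> v \<in> C"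
      and M: "M \<subseteq> {{u, v} | u v. u \<in> S' \<and> v \<in> S' \<and> E u v}" "pairwise disjnt M" "finite M"
      and card: "card C \<le> card M"
      by blast
    have "l \<notin> S'" "p \<notin> S'" unfolding S'_def by auto
    note M_insert = matching_insert_edge[OF M this]
    have "insert p C \<subseteq> S" using C(1) lp(2) unfolding S'_def by auto
    moreover have "\<forall>u\<in>S. \<forall>v\<in>S. E u v \<longrightarrow> u \<in> insert p C \<or> v \<in> insert p C"
      using cover_insert_leaf_neighbour[OF C(2)[unfolded S'_def] leaf] .
    moreover have "insert {l, p} M \<subseteq> {{u, v} | u v. u \<in> S \<and> v \<in> S \<and> E u v}"
      using M(1) lp(1-3) unfolding S'_def by blast
    moreover have "card (insert p C) \<le> card (insert {l, p} M)"
    proof -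
      have "finite C" using C(1) \<open>finite S'\<close> finite_subset by blast
      then have "card (insert p C) \<le> Suc (card C)" by (simp add: card_insert_if)
      then show ?thesis using card M_insert(2) by simp
    qed
    ultimately show ?thesis using M(3) M_insert(1) by blast
  qed
qed

end

definition arcs :: "nat \<Rightarrow> (nat \<Rightarrow> nat \<Rightarrow> bool) \<Rightarrow> (nat \<times> nat) set" where
  "arcs n E = {(x, y). x < n \<and> y < n \<and> E x y}"

lemma finite_arcs [simp]: "finite (arcs n E)"
  unfolding arcs_def by (rule finite_subset[of _ "{..<n} \<times> {..<n}"]) auto

lemma sum_degree_eq_card_arcs: "(\<Sum>x<n. degree n E x) = card (arcs n E)"
proof -
  have "arcs n E = (SIGMA x:{..<n}. {y. y < n \<and> E x y})" unfolding arcs_def by auto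
  then show ?thesis unfolding degree_def by (simp add: card_SigmaI)
qed

lemma adj_mat_carrier: "adj_mat n E \<in> carrier_mat n n"
  by (simp add: adj_mat_def)

lemma deg_mat_carrier: "deg_mat n E \<in> carrier_mat n n"
  by (simp add: deg_mat_def)

lemma sum_orientation:
  fixes f :: "'a \<times> 'a \<Rightarrow> real"
  assumes fin: "finite A" and H: "H \<subseteq> A"
    and swap: "\<And>x y. (x, y) \<in> A \<Longrightarrow> (y, x) \<in> A \<and> ((y, x) \<in> H \<longleftrightarrow> (x, y) \<notin> H)"
    and f: "\<And>x y. (x, y) \<in> A \<Longrightarrow> f (y, x) = f (x, y)"
  shows "sum f A = 2 * sum f H" "card A = 2 * card H"
proof -
  have img: "A - H = prod.swap ` H"
  proof (rule equalityI; rule subsetI)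
    fix p assume p: "p \<in> A - H"
    obtain x y where xy: "p = (x, y)" by (cases p)
    have "(y, x) \<in> H" using p xy swap by auto
    then show "p \<in> prod.swap ` H" using xy by force
  next
    fix p assume "p \<in> prod.swap ` H"
    then obtain x y where xy: "p = (y, x)" "(x, y) \<in> H" by auto
    then show "p \<in> A - H" using H swap by auto
  qed
  have inj: "inj_on prod.swap H" by (rule inj_onI) auto
  have "sum f (A - H) = sum (f \<circ> prod.swap) H" unfolding img by (rule sum.reindex[OF inj])
  also have "\<dots> = sum f H"
  proof (rule sum.cong[OF refl])
    fix p assume "p \<in> H"
    moreover obtain x y where "p = (x, y)" by (cases p)
    ultimately show "(f \<circ> prod.swap) p = f p" using H f by auto
  qed
  finally have "sum f (A - H) = sum f H" .
  moreover have "sum f A = sum f H + sum f (A - H)" using sum.subset_diff[OF H fin, of f] by linarith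
  moreover have "card (A - H) = card H" unfolding img by (rule card_image[OF inj])
  moreover have "card (A - H) = card A - card H" "card H \<le> card A"
    using fin H finite_subset by (blast intro: card_Diff_subset card_mono)+
  ultimately show "sum f A = 2 * sum f H" "card A = 2 * card H" by auto
qed

lemma col_proj_trace_carrier:
  assumes "M \<in> carrier_mat n n"
  shows "col_proj_trace M U I = (\<Sum>x<n. \<Sum>y<n. M $$ (x, y) * col_proj U I x y)"
  using assms unfolding col_proj_trace_def by simp

lemma col_proj_trace_add:
  assumes "M \<in> carrier_mat n n" "N \<in> carrier_mat n n"
  shows "col_proj_trace (M + N) U I = col_proj_trace M U I + col_proj_trace N U I"
  using assms by (simp add: col_proj_trace_def algebra_simps sum.distrib)

lemma col_proj_trace_adj_mat:
  "col_proj_trace (adj_mat n E) U I = (\<Sum>p\<in>arcs n E. col_proj U I (fst p) (snd p))"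
proof -
  have "col_proj_trace (adj_mat n E) U I = (\<Sum>x<n. \<Sum>y<n. if E x y then col_proj U I x y else 0)"
    unfolding col_proj_trace_carrier[of _ n, OF adj_mat_carrier]
    by (intro sum.cong refl) (simp add: adj_mat_def)
  also have "\<dots> = (\<Sum>x<n. \<Sum>y\<in>{y. y < n \<and> E x y}. col_proj U I x y)"
  proof (rule sum.cong[OF refl])
    fix x
    have "{y \<in> {..<n}. E x y} = {y. y < n \<and> E x y}" by auto
    then show "(\<Sum>y<n. if E x y then col_proj U I x y else 0) = (\<Sum>y\<in>{y. y < n \<and> E x y}. col_proj U I x y)"
      using sum.inter_filter[of "{..<n}" "col_proj U I x" "E x"] by simp
  qed
  also have "\<dots> = (\<Sum>p\<in>(SIGMA x:{..<n}. {y. y < n \<and> E x y}). col_proj U I (fst p) (snd p))"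
    by (subst sum.Sigma) (auto simp: case_prod_beta)
  also have "(SIGMA x:{..<n}. {y. y < n \<and> E x y}) = arcs n E" unfolding arcs_def by auto
  finally show ?thesis .
qed

lemma col_proj_trace_deg_mat:
  "col_proj_trace (deg_mat n E) U I = (\<Sum>x<n. real (degree n E x) * col_proj U I x x)"
  unfolding col_proj_trace_carrier[of _ n, OF deg_mat_carrier]
  by (intro sum.cong refl) (simp add: deg_mat_def if_distrib[of "\<lambda>t. t * _"] sum.delta cong: if_cong)

definition signless_laplacian :: "nat \<Rightarrow> (nat \<Rightarrow> nat \<Rightarrow> bool) \<Rightarrow> real mat" where
  "signless_laplacian n E = deg_mat n E + adj_mat n E"

lemma signless_laplacian_carrier: "signless_laplacian n E \<in> carrier_mat n n"
  unfolding signless_laplacian_def by (intro add_carrier_mat deg_mat_carrier adj_mat_carrier)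

lemma signless_laplacian_entry:
  "x < n \<Longrightarrow> y < n \<Longrightarrow> signless_laplacian n E $$ (x, y)
    = (if x = y then real (degree n E x) else 0) + (if E x y then 1 else 0)"
  by (simp add: signless_laplacian_def deg_mat_def adj_mat_def)

lemma col_proj_trace_signless_laplacian:
  "col_proj_trace (signless_laplacian n E) U I
    = col_proj_trace (deg_mat n E) U I + col_proj_trace (adj_mat n E) U I"
  unfolding signless_laplacian_def by (rule col_proj_trace_add[OF deg_mat_carrier adj_mat_carrier])

lemma adj_trace_compl:
  assumes "orthogonal_mat n U" "I \<subseteq> {..<n}" and irrefl: "\<And>u. \<not> E u u"
  shows "col_proj_trace (adj_mat n E) U ({..<n} - I) = - col_proj_trace (adj_mat n E) U I"
proof -
  interpret orthogonal_mat n U by fact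
  have "col_proj U ({..<n} - I) x y = - col_proj U I x y" if "(x, y) \<in> arcs n E" for x y
    using that irrefl[of x] by (intro col_proj_compl[OF assms(2)]) (auto simp: arcs_def)
  then show ?thesis
    unfolding col_proj_trace_adj_mat sum_negf[symmetric] by (intro sum.cong refl) (metis prod.collapse)
qed

lemma adj_trace_abs_le_bipartite:
  assumes U: "orthogonal_mat n U" and I: "I \<subseteq> {..<n}" and sym: "\<And>u v. E u v \<Longrightarrow> E v u"
    and X: "\<And>u v. E u v \<Longrightarrow> u \<in> X \<longleftrightarrow> v \<notin> X" and m: "card (arcs n E) \<le> 2 * m"
  shows "\<bar>col_proj_trace (adj_mat n E) U I\<bar> \<le> sqrt (real (card I) * real m)"
proof -
  interpret orthogonal_mat n U by fact
  let ?f = "\<lambda>p. col_proj U I (fst p) (snd p)"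
  define H where "H = {p \<in> arcs n E. fst p \<in> X}"
  have swap: "(y, x) \<in> arcs n E \<and> ((y, x) \<in> H \<longleftrightarrow> (x, y) \<notin> H)" if "(x, y) \<in> arcs n E" for x y
    using that sym X unfolding arcs_def H_def by auto
  have H_sub: "H \<subseteq> arcs n E" unfolding H_def by auto
  have f_sym: "?f (y, x) = ?f (x, y)" for x y by (simp add: col_proj_sym)
  note orient = sum_orientation[where f = ?f, OF finite_arcs H_sub swap f_sym]
  have tr: "col_proj_trace (adj_mat n E) U I = 2 * sum ?f H"
    using orient(1) by (simp add: col_proj_trace_adj_mat)
  have card_H: "real (card H) \<le> real m" using orient(2) m by simp
  define X' where "X' = X \<inter> {..<n}"
  have "sum (\<lambda>p. (?f p)\<^sup>2) H \<le> sum (\<lambda>p. (?f p)\<^sup>2) (SIGMA x:X'. {..<n} - X')"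
    by (rule sum_mono2) (use X in \<open>auto simp: H_def X'_def arcs_def\<close>)
  also have "\<dots> = (\<Sum>x\<in>X'. \<Sum>y\<in>{..<n} - X'. (col_proj U I x y)\<^sup>2)"
    by (subst sum.Sigma) (auto simp: X'_def case_prod_beta)
  also have "\<dots> \<le> real (card I) / 4" by (rule col_proj_cut_le[OF I]) (auto simp: X'_def)
  finally have sq: "sum (\<lambda>p. (?f p)\<^sup>2) H \<le> real (card I) / 4" .
  have "(2 * sum ?f H)\<^sup>2 \<le> 4 * (real (card H) * sum (\<lambda>p. (?f p)\<^sup>2) H)"
    using square_sum_le_card_sum_squares[of ?f H] by (simp add: power_mult_distrib)
  also have "\<dots> \<le> 4 * (real m * (real (card I) / 4))"
    using card_H sq by (intro mult_left_mono mult_mono) (auto intro: sum_nonneg)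
  finally have "(2 * sum ?f H)\<^sup>2 \<le> real (card I) * real m" by (simp add: mult.commute)
  then have "sqrt ((2 * sum ?f H)\<^sup>2) \<le> sqrt (real (card I) * real m)" by (rule real_sqrt_le_mono)
  then show ?thesis unfolding tr real_sqrt_abs .
qed

lemma adj_trace_le_vertex_cover:
  assumes U: "orthogonal_mat n U" and I: "I \<subseteq> {..<n}" and sym: "\<And>u v. E u v \<Longrightarrow> E v u"
    and irrefl: "\<And>u. \<not> E u u" and C: "C \<subseteq> {..<n}" and cover: "\<And>u v. E u v \<Longrightarrow> u \<in> C \<or> v \<in> C"
    and m: "card (arcs n E) \<le> 2 * m"
  shows "col_proj_trace (adj_mat n E) U I \<le> sqrt (real (card C) * real m)"
proof -
  interpret orthogonal_mat n U by fact
  let ?f = "\<lambda>p. col_proj U I (fst p) (snd p)"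
  define N where "N c = {y. y < n \<and> E c y \<and> (y \<notin> C \<or> c < y)}" for c
  define H where "H = (SIGMA c:C. N c)"
  have swap: "(y, x) \<in> arcs n E \<and> ((y, x) \<in> H \<longleftrightarrow> (x, y) \<notin> H)" if "(x, y) \<in> arcs n E" for x y
  proof -
    have "E x y" "x \<noteq> y" "E y x" using that irrefl sym unfolding arcs_def by auto
    then show ?thesis using that cover[of x y] C unfolding arcs_def H_def N_def by auto
  qed
  have H: "H \<subseteq> arcs n E" using C unfolding H_def N_def arcs_def by auto
  have f_sym: "?f (y, x) = ?f (x, y)" for x y by (simp add: col_proj_sym)
  note orient = sum_orientation[where f = ?f, OF finite_arcs H swap f_sym]
  have fin_C: "finite C" using C finite_subset by blast
  have fin_N: "finite (N c)" for c unfolding N_def by simp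
  have card_H: "real (card H) \<le> real m" using orient(2) m by simp
  have "col_proj_trace (adj_mat n E) U I = 2 * sum ?f H"
    using orient(1) by (simp add: col_proj_trace_adj_mat)
  also have "sum ?f H = (\<Sum>c\<in>C. \<Sum>y\<in>N c. col_proj U I c y)"
    unfolding H_def by (subst sum.Sigma) (auto simp: fin_C fin_N case_prod_beta)
  also have "2 * \<dots> = (\<Sum>c\<in>C. 2 * (\<Sum>y\<in>N c. col_proj U I c y))"
    by (simp add: sum_distrib_left)
  also have "\<dots> \<le> (\<Sum>c\<in>C. sqrt (real (card (N c))))"
    by (intro sum_mono col_proj_star_le[OF I]) (use C irrefl in \<open>auto simp: N_def\<close>)
  also have "\<dots> \<le> sqrt (real (card C) * real m)"
  proof (rule real_le_rsqrt)
    have "(\<Sum>c\<in>C. sqrt (real (card (N c))))\<^sup>2 \<le> real (card C) * (\<Sum>c\<in>C. real (card (N c)))"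
      using square_sum_le_card_sum_squares[of "\<lambda>c. sqrt (real (card (N c)))" C] by simp
    also have "(\<Sum>c\<in>C. real (card (N c))) = real (card H)"
      unfolding H_def using fin_C fin_N by (simp add: card_SigmaI)
    finally show "(\<Sum>c\<in>C. sqrt (real (card (N c))))\<^sup>2 \<le> real (card C) * real m"
      using card_H by (meson mult_left_mono of_nat_0_le_iff order_trans)
  qed
  finally show ?thesis .
qed


lemma sum_neighbours_const:
  "(\<Sum>y<n. if E x y then c else 0) = real (degree n E x) * c"
proof -
  have "{y \<in> {..<n}. E x y} = {y. y < n \<and> E x y}" by auto
  then show ?thesis
    using sum.inter_filter[of "{..<n}" "\<lambda>_. c" "E x"] by (simp add: degree_def)
qed

lemma sum_neighbours_square_le:
  "(\<Sum>y<n. if E x y then g y else 0)\<^sup>2 \<le> real (degree n E x) * (\<Sum>y<n. if E x y then (g y)\<^sup>2 else 0)"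
proof -
  have "{y \<in> {..<n}. E x y} = {y. y < n \<and> E x y}" by auto
  then have "(\<Sum>y<n. if E x y then f y else 0) = sum f {y. y < n \<and> E x y}" for f :: "nat \<Rightarrow> real"
    using sum.inter_filter[of "{..<n}" f "E x"] by simp
  then show ?thesis
    unfolding degree_def using square_sum_le_card_sum_squares[of g "{y. y < n \<and> E x y}"] by simp
qed

lemma signless_laplacian_mult:
  assumes "x < n"
  shows "(\<Sum>y<n. signless_laplacian n E $$ (x, y) * v y) = (\<Sum>y<n. if E x y then v x + v y else 0)"
proof -
  have "(\<Sum>y<n. signless_laplacian n E $$ (x, y) * v y)
      = (\<Sum>y<n. (if x = y then real (degree n E x) * v y else 0) + (if E x y then v y else 0))"
    using assms by (intro sum.cong refl) (simp add: signless_laplacian_entry distrib_right)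
  also have "\<dots> = real (degree n E x) * v x + (\<Sum>y<n. if E x y then v y else 0)"
    using assms by (simp add: sum.distrib)
  also have "real (degree n E x) * v x = (\<Sum>y<n. if E x y then v x else 0)"
    by (simp add: sum_neighbours_const)
  finally show ?thesis
    by (simp only: sum.distrib[symmetric]) (intro sum.cong refl, simp)
qed

lemma signless_laplacian_eigen_arc_sum:
  assumes sym: "\<And>u v. E u v \<Longrightarrow> E v u"
    and eigen: "\<And>x. x < n \<Longrightarrow> (\<Sum>y<n. signless_laplacian n E $$ (x, y) * v y) = \<mu> * v x"
    and unit: "(\<Sum>x<n. (v x)\<^sup>2) = 1"
  shows "(\<Sum>x<n. \<Sum>y<n. if E x y then (v x + v y)\<^sup>2 else 0) = 2 * \<mu>"
proof -
  have half: "(\<Sum>x<n. \<Sum>y<n. if E x y then v x * (v x + v y) else 0) = \<mu>"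
  proof -
    have "(\<Sum>x<n. \<Sum>y<n. if E x y then v x * (v x + v y) else 0)
        = (\<Sum>x<n. v x * (\<Sum>y<n. signless_laplacian n E $$ (x, y) * v y))"
      by (intro sum.cong refl) (simp add: signless_laplacian_mult sum_distrib_left if_distrib[of "\<lambda>t. _ * t"] cong: if_cong)
    also have "\<dots> = (\<Sum>x<n. v x * (\<mu> * v x))" by (intro sum.cong refl) (simp add: eigen)
    also have "\<dots> = \<mu> * (\<Sum>x<n. (v x)\<^sup>2)"
      by (simp add: sum_distrib_left power2_eq_square mult_ac)
    finally show ?thesis using unit by simp
  qed
  have "(\<Sum>x<n. \<Sum>y<n. if E x y then v y * (v y + v x) else 0)
      = (\<Sum>y<n. \<Sum>x<n. if E x y then v y * (v y + v x) else 0)"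
    by (rule sum.swap)
  also have "\<dots> = (\<Sum>y<n. \<Sum>x<n. if E y x then v y * (v y + v x) else 0)"
    using sym by (intro sum.cong refl) metis
  also have "\<dots> = \<mu>" by (rule half)
  finally have other_half: "(\<Sum>x<n. \<Sum>y<n. if E x y then v y * (v y + v x) else 0) = \<mu>" .
  have "(\<Sum>x<n. \<Sum>y<n. if E x y then (v x + v y)\<^sup>2 else 0)
      = (\<Sum>x<n. \<Sum>y<n. (if E x y then v x * (v x + v y) else 0) + (if E x y then v y * (v y + v x) else 0))"
    by (intro sum.cong refl) (simp add: power2_eq_square algebra_simps)
  also have "\<dots> = 2 * \<mu>" using half other_half by (simp add: sum.distrib)
  finally show ?thesis .
qed

text \<open>Cauchy-Schwarz over the neighbours of \<open>x\<close> gives \<open>(\<mu> v\<^sub>x)\<^sup>2 \<le> d\<^sub>x S\<^sub>x\<close>, where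
  \<open>S\<^sub>x = \<Sum>\<^sub>y\<^sub>~\<^sub>x (v\<^sub>x + v\<^sub>y)\<^sup>2\<close> and \<open>\<Sum>\<^sub>x S\<^sub>x = 2\<mu>\<close>.\<close>
lemma signless_laplacian_eigenvalue_bound:
  assumes sym: "\<And>u v. E u v \<Longrightarrow> E v u" and deg: "\<And>x. x < n \<Longrightarrow> 1 \<le> degree n E x"
    and eigen: "\<And>x. x < n \<Longrightarrow> (\<Sum>y<n. signless_laplacian n E $$ (x, y) * v y) = \<mu> * v x"
    and unit: "(\<Sum>x<n. (v x)\<^sup>2) = 1"
  shows "0 \<le> \<mu>" "\<mu> - 2 \<le> \<mu> * (\<Sum>x<n. (v x)\<^sup>2 * (1 - 1 / real (degree n E x)))"
proof -
  define S where "S x = (\<Sum>y<n. if E x y then (v x + v y)\<^sup>2 else 0)" for x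
  have sum_S: "(\<Sum>x<n. S x) = 2 * \<mu>"
    unfolding S_def by (rule signless_laplacian_eigen_arc_sum[OF sym eigen unit])
  have S_nonneg: "0 \<le> S x" for x unfolding S_def by (intro sum_nonneg) auto
  show \<mu>: "0 \<le> \<mu>" using sum_S sum_nonneg[of "{..<n}" S] S_nonneg by simp
  have local: "\<mu>\<^sup>2 * ((v x)\<^sup>2 / real (degree n E x)) \<le> S x" if x: "x < n" for x
  proof -
    have "(\<mu> * v x)\<^sup>2 \<le> real (degree n E x) * S x"
      using sum_neighbours_square_le[where g = "\<lambda>y. v x + v y" and n = n and E = E and x = x] eigen[OF x]
      unfolding S_def signless_laplacian_mult[OF x] by simp
    with deg[OF x] show ?thesis by (simp add: field_simps power_mult_distrib)
  qed
  have "\<mu> * (\<mu> * (\<Sum>x<n. (v x)\<^sup>2 / real (degree n E x))) \<le> \<mu> * 2"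
  proof -
    have "\<mu> * (\<mu> * (\<Sum>x<n. (v x)\<^sup>2 / real (degree n E x))) = (\<Sum>x<n. \<mu>\<^sup>2 * ((v x)\<^sup>2 / real (degree n E x)))"
      by (simp add: sum_distrib_left power2_eq_square mult_ac)
    also have "\<dots> \<le> (\<Sum>x<n. S x)" by (intro sum_mono local) simp
    finally show ?thesis using sum_S by simp
  qed
  then have "\<mu> * (\<Sum>x<n. (v x)\<^sup>2 / real (degree n E x)) \<le> 2"
    using \<mu> by (cases "\<mu> = 0") (simp_all add: mult_le_cancel_left_pos)
  moreover have "\<mu> * (\<Sum>x<n. (v x)\<^sup>2 * (1 - 1 / real (degree n E x)))
      = \<mu> - \<mu> * (\<Sum>x<n. (v x)\<^sup>2 / real (degree n E x))"
    using unit by (simp add: algebra_simps sum_subtractf sum_distrib_left)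
  ultimately show "\<mu> - 2 \<le> \<mu> * (\<Sum>x<n. (v x)\<^sup>2 * (1 - 1 / real (degree n E x)))" by simp
qed

lemma signless_laplacian_symmetric:
  assumes sym: "\<And>u v. E u v \<Longrightarrow> E v u"
  shows "transpose_mat (signless_laplacian n E) = signless_laplacian n E"
proof (rule eq_matI)
  fix i j assume "i < dim_row (signless_laplacian n E)" "j < dim_col (signless_laplacian n E)"
  then show "transpose_mat (signless_laplacian n E) $$ (i, j) = signless_laplacian n E $$ (i, j)"
    using signless_laplacian_carrier[of n E] sym[of i j] sym[of j i]
    by (auto simp: signless_laplacian_entry)
qed (use signless_laplacian_carrier[of n E] in auto)

text \<open>Every eigenvalue \<open>\<mu>\<^sub>j\<close> of the signless Laplacian exceeds 2 by at most \<open>R\<^sub>j\<close>, and the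
  \<open>R\<^sub>j\<close> add up to \<open>\<Sum>\<^sub>x (d\<^sub>x - 1)\<close>.\<close>
lemma signless_laplacian_trace_le:
  assumes U: "orthogonal_mat n U" and I: "I \<subseteq> {..<n}"
    and sym: "\<And>u v. E u v \<Longrightarrow> E v u" and irrefl: "\<And>u. \<not> E u u"
    and deg: "\<And>x. x < n \<Longrightarrow> 1 \<le> degree n E x"
  shows "col_proj_trace (signless_laplacian n E) U I \<le> 2 * real (card I) + (\<Sum>x<n. real (degree n E x) - 1)"
proof -
  let ?Q = "signless_laplacian n E"
  obtain V D where V: "orthogonal_mat n V" and D: "D \<in> carrier_mat n n" "diagonal_mat D"
    and Q_eq: "?Q = V * D * transpose_mat V"
    using real_symmetric_spectral[OF signless_laplacian_carrier signless_laplacian_symmetric[where E = E, OF sym]]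
    by blast
  interpret V: orthogonal_mat n V by fact
  define \<mu> where "\<mu> j = D $$ (j, j)" for j
  have spec: "?Q $$ (x, y) = (\<Sum>j<n. V $$ (x, j) * \<mu> j * V $$ (y, j))" if "x < n" "y < n" for x y
    using V.spectral_entries[OF D Q_eq that] unfolding \<mu>_def .
  define w where "w x = 1 - 1 / real (degree n E x)" for x
  define R where "R j = \<mu> j * (\<Sum>x<n. (V $$ (x, j))\<^sup>2 * w x)" for j
  have w: "0 \<le> w x" if "x < n" for x using deg[OF that] unfolding w_def by (simp add: field_simps)
  have eig: "0 \<le> \<mu> j \<and> \<mu> j - 2 \<le> R j" if j: "j < n" for j
    using signless_laplacian_eigenvalue_bound[OF sym deg V.spectral_eigenvector[OF spec _ j] V.col_norm[OF j]]
    unfolding R_def w_def by auto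
  have R_nonneg: "0 \<le> R j" if "j < n" for j
    unfolding R_def using eig[OF that] w by (intro mult_nonneg_nonneg sum_nonneg) auto
  have "(\<Sum>j<n. R j) = (\<Sum>x<n. w x * ?Q $$ (x, x))"
    unfolding R_def by (rule spectral_weighted_diag[OF spec])
  also have "\<dots> = (\<Sum>x<n. real (degree n E x) - 1)"
  proof (rule sum.cong[OF refl])
    fix x assume "x \<in> {..<n}"
    then have "x < n" "real (degree n E x) \<noteq> 0" using deg[of x] by auto
    then show "w x * ?Q $$ (x, x) = real (degree n E x) - 1"
      using irrefl[of x] by (simp add: signless_laplacian_entry w_def field_simps)
  qed
  finally have R_sum: "(\<Sum>j<n. R j) = (\<Sum>x<n. real (degree n E x) - 1)" .
  have bound: "\<mu> j \<le> 2 + R j" if "j < n" for j using eig[OF that] by simp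
  show ?thesis
    using col_proj_trace_le_eigen_bound[OF U V I signless_laplacian_carrier spec bound R_nonneg]
    by (simp add: R_sum mult.commute)
qed

lemma deg_trace_le:
  assumes U: "orthogonal_mat n U" and I: "I \<subseteq> {..<n}" and deg: "\<And>x. x < n \<Longrightarrow> 1 \<le> degree n E x"
  shows "col_proj_trace (deg_mat n E) U I \<le> real (card I) + (\<Sum>x<n. real (degree n E x) - 1)"
proof -
  interpret orthogonal_mat n U by fact
  have "col_proj_trace (deg_mat n E) U I
      = (\<Sum>x<n. col_proj U I x x) + (\<Sum>x<n. (real (degree n E x) - 1) * col_proj U I x x)"
    unfolding col_proj_trace_deg_mat by (simp add: sum.distrib[symmetric] algebra_simps)
  also have "\<dots> \<le> real (card I) + (\<Sum>x<n. real (degree n E x) - 1)"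
    unfolding sum_col_proj_diag[OF I]
    using deg col_proj_diag_le_one[OF I] col_proj_diag_nonneg
    by (intro add_left_mono sum_mono) (simp add: mult_left_le)
  finally show ?thesis .
qed


lemma tree_forest:
  assumes "is_tree n E"
  shows "forest E"
  by unfold_locales (use assms in \<open>auto simp: is_tree_def simple_graph_def\<close>)

lemma tree_edge_range:
  assumes "is_tree n E" "E u v"
  shows "u < n" "v < n"
  using assms by (auto simp: is_tree_def simple_graph_def)

lemma tree_card_arcs:
  assumes "is_tree n E"
  shows "card (arcs n E) \<le> 2 * (n - 1)"
proof -
  interpret forest E by (rule tree_forest[OF assms])
  have "0 \<in> {..<n}" using assms by (simp add: is_tree_def)
  then have "{..<n} \<noteq> {}" by blast
  moreover have "arcs n E = {(u, v). u \<in> {..<n} \<and> v \<in> {..<n} \<and> E u v}"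
    unfolding arcs_def by auto
  ultimately have "card (arcs n E) + 2 \<le> 2 * n" using card_arcs_within[OF finite_lessThan] by simp
  then show ?thesis by arith
qed

lemma tree_sum_degree_le:
  assumes "is_tree n E"
  shows "(\<Sum>x<n. real (degree n E x) - 1) \<le> real n - 2"
proof -
  have "(\<Sum>x<n. real (degree n E x) - 1) = real (card (arcs n E)) - real n"
    by (simp add: sum_subtractf sum_degree_eq_card_arcs flip: of_nat_sum)
  also have "\<dots> \<le> real n - 2"
    using tree_card_arcs[OF assms] assms by (auto simp: is_tree_def)
  finally show ?thesis .
qed

lemma tree_degree_pos:
  assumes tree: "is_tree n E" and n: "2 \<le> n" and x: "x < n"
  shows "1 \<le> degree n E x"
proof -
  define y :: nat where "y = (if x = 0 then 1 else 0)"
  have y: "y < n" "y \<noteq> x" unfolding y_def using n by auto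
  have "E\<^sup>*\<^sup>* x y" using tree x y unfolding is_tree_def connected_graph_def by blast
  then obtain z where "E x z" using y(2) by (cases rule: converse_rtranclpE) auto
  then have "z \<in> {v. v < n \<and> E x v}" using tree_edge_range[OF tree] by auto
  then have "card {v. v < n \<and> E x v} > 0" by (auto simp: card_gt_0_iff)
  then show ?thesis unfolding degree_def by simp
qed

lemma tree_single_vertex:
  assumes "is_tree 1 E"
  shows "\<not> E u v"
  using assms tree_edge_range[OF assms] forest.irrefl[OF tree_forest[OF assms]] by fastforce

lemma tree_deg_trace_le:
  assumes tree: "is_tree n E" and U: "orthogonal_mat n U" and I: "I \<subseteq> {..<n}" "1 \<le> card I"
  shows "col_proj_trace (deg_mat n E) U I \<le> real n + real (card I) - 2"
proof (cases "n = 1")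
  case True
  then have "degree n E x = 0" for x
    using tree_single_vertex[of E] tree unfolding degree_def by simp
  then show ?thesis using True I(2) by (simp add: col_proj_trace_deg_mat)
next
  case False
  then have "2 \<le> n" using tree by (auto simp: is_tree_def)
  then show ?thesis
    using deg_trace_le[OF U I(1) tree_degree_pos[OF tree]] tree_sum_degree_le[OF tree] by simp
qed

lemma tree_signless_trace_le:
  assumes tree: "is_tree n E" and U: "orthogonal_mat n U" and I: "I \<subseteq> {..<n}" "1 \<le> card I"
  shows "col_proj_trace (signless_laplacian n E) U I \<le> real n + 2 * real (card I) - 2"
proof (cases "n = 1")
  case True
  then have "degree n E x = 0" "arcs n E = {}" for x
    using tree_single_vertex[of E] tree unfolding degree_def arcs_def by simp_all
  then show ?thesis
    using True I(2)
    by (simp add: col_proj_trace_signless_laplacian col_proj_trace_deg_mat col_proj_trace_adj_mat)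
next
  case False
  interpret forest E by (rule tree_forest[OF tree])
  have "2 \<le> n" using False tree by (auto simp: is_tree_def)
  then show ?thesis
    using signless_laplacian_trace_le[OF U I(1) sym irrefl tree_degree_pos[OF tree]]
      tree_sum_degree_le[OF tree]
    by simp
qed

lemma card_le_matching_number:
  assumes "is_matching n E M"
  shows "card M \<le> matching_number n E"
proof -
  have "edge_set n E = (\<lambda>(u, v). {u, v}) ` arcs n E"
    unfolding edge_set_def arcs_def by auto
  then have "finite (edge_set n E)" by simp
  then have "finite {card M | M. is_matching n E M}"
    unfolding is_matching_def by (auto intro: finite_subset[of _ "card ` Pow (edge_set n E)"])
  then show ?thesis
    unfolding matching_number_def using assms by (auto intro: Max_ge)
qed

lemma tree_vertex_cover:
  assumes tree: "is_tree n E"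
  obtains C where "C \<subseteq> {..<n}" "\<And>u v. E u v \<Longrightarrow> u \<in> C \<or> v \<in> C" "card C \<le> matching_number n E"
proof -
  interpret forest E by (rule tree_forest[OF tree])
  obtain C M where C: "C \<subseteq> {..<n}" "\<forall>u\<in>{..<n}. \<forall>v\<in>{..<n}. E u v \<longrightarrow> u \<in> C \<or> v \<in> C"
    and M: "M \<subseteq> {{u, v} | u v. u \<in> {..<n} \<and> v \<in> {..<n} \<and> E u v}" "pairwise disjnt M"
    and card: "card C \<le> card M"
    using vertex_cover_le_matching[of "{..<n}"] by auto
  have "is_matching n E M" using M unfolding is_matching_def edge_set_def by auto
  then have "card C \<le> matching_number n E" using card card_le_matching_number by (blast intro: le_trans)
  moreover have "u \<in> C \<or> v \<in> C" if "E u v" for u v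
    using C(2) tree_edge_range[OF tree that] that by blast
  ultimately show ?thesis using that C(1) by blast
qed

lemma tree_bipartition:
  assumes tree: "is_tree n E"
  obtains X where "\<And>u v. E u v \<Longrightarrow> u \<in> X \<longleftrightarrow> v \<notin> X"
proof -
  interpret forest E by (rule tree_forest[OF tree])
  obtain X where "\<forall>u\<in>{..<n}. \<forall>v\<in>{..<n}. E u v \<longrightarrow> (u \<in> X \<longleftrightarrow> v \<notin> X)"
    using bipartition[of "{..<n}"] by blast
  then have "u \<in> X \<longleftrightarrow> v \<notin> X" if "E u v" for u v
    using tree_edge_range[OF tree that] that by blast
  then show ?thesis by (rule that)
qed

lemma tree_adj_trace_le:
  assumes tree: "is_tree n E" and U: "orthogonal_mat n U" and I: "I \<subseteq> {..<n}"
  shows "col_proj_trace (adj_mat n E) U I \<le> sqrt (real (card I) * (real n - 1))"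
    and "col_proj_trace (adj_mat n E) U I \<le> sqrt (real (n - card I) * (real n - 1))"
    and "col_proj_trace (adj_mat n E) U I \<le> sqrt (real (matching_number n E) * (real n - 1))"
proof -
  interpret forest E by (rule tree_forest[OF tree])
  have m: "card (arcs n E) \<le> 2 * (n - 1)" by (rule tree_card_arcs[OF tree])
  have n1: "real (n - 1) = real n - 1" using tree by (simp add: is_tree_def of_nat_diff)
  obtain X where X: "\<And>u v. E u v \<Longrightarrow> u \<in> X \<longleftrightarrow> v \<notin> X" using tree_bipartition[OF tree] by blast
  show "col_proj_trace (adj_mat n E) U I \<le> sqrt (real (card I) * (real n - 1))"
    using adj_trace_abs_le_bipartite[where E = E, OF U I sym X m] unfolding n1 by linarith
  have "card ({..<n} - I) = n - card I" using I by (simp add: card_Diff_subset finite_subset)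
  then show "col_proj_trace (adj_mat n E) U I \<le> sqrt (real (n - card I) * (real n - 1))"
    using adj_trace_abs_le_bipartite[where E = E and I = "{..<n} - I", OF U _ sym X m] adj_trace_compl[where E = E, OF U I irrefl]
    unfolding n1 by auto
  obtain C where C: "C \<subseteq> {..<n}" "\<And>u v. E u v \<Longrightarrow> u \<in> C \<or> v \<in> C"
    and card_C: "card C \<le> matching_number n E"
    using tree_vertex_cover[OF tree] by blast
  have "col_proj_trace (adj_mat n E) U I \<le> sqrt (real (card C) * (real n - 1))"
    using adj_trace_le_vertex_cover[where E = E, OF U I sym irrefl C m] unfolding n1 .
  also have "\<dots> \<le> sqrt (real (matching_number n E) * (real n - 1))"
    using card_C tree by (intro real_sqrt_le_mono mult_right_mono) (auto simp: is_tree_def)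
  finally show "col_proj_trace (adj_mat n E) U I \<le> sqrt (real (matching_number n E) * (real n - 1))" .
qed

lemma A_alpha_carrier: "A_alpha \<alpha> n E \<in> carrier_mat n n"
  by (simp add: A_alpha_def deg_mat_def adj_mat_def)

lemma A_alpha_symmetric:
  assumes sym: "\<And>u v. E u v \<Longrightarrow> E v u"
  shows "transpose_mat (A_alpha \<alpha> n E) = A_alpha \<alpha> n E"
proof (rule eq_matI)
  fix i j assume "i < dim_row (A_alpha \<alpha> n E)" "j < dim_col (A_alpha \<alpha> n E)"
  then show "transpose_mat (A_alpha \<alpha> n E) $$ (i, j) = A_alpha \<alpha> n E $$ (i, j)"
    using A_alpha_carrier[of \<alpha> n E] sym[of i j] sym[of j i]
    by (auto simp: A_alpha_def deg_mat_def adj_mat_def)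
qed (use A_alpha_carrier[of \<alpha> n E] in auto)

text \<open>\<open>A\<^sub>\<alpha> = \<alpha> Q + (1 - 2\<alpha>) A = (1 - \<alpha>) Q + (2\<alpha> - 1) D\<close> with \<open>Q = D + A\<close>; here \<open>d\<close> and \<open>a\<close>
  stand for the traces against \<open>D\<close> and \<open>A\<close>.\<close>
lemma alpha_combination_le:
  fixes \<alpha> d a B k r :: real
  assumes "0 \<le> \<alpha>" "\<alpha> < 1" "d + a \<le> B" "d \<le> B - k" "0 \<le> k"
  shows "\<alpha> < 1/2 \<Longrightarrow> a \<le> r \<Longrightarrow> \<alpha> * d + (1 - \<alpha>) * a \<le> \<alpha> * B + (1 - 2 * \<alpha>) * r"
    and "1/2 \<le> \<alpha> \<Longrightarrow> \<alpha> * d + (1 - \<alpha>) * a \<le> \<alpha> * B"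
proof -
  assume "\<alpha> < 1/2" "a \<le> r"
  then have "\<alpha> * (d + a) \<le> \<alpha> * B" "(1 - 2 * \<alpha>) * a \<le> (1 - 2 * \<alpha>) * r"
    using assms by (auto intro: mult_left_mono)
  then show "\<alpha> * d + (1 - \<alpha>) * a \<le> \<alpha> * B + (1 - 2 * \<alpha>) * r" by (simp add: algebra_simps)
next
  assume "1/2 \<le> \<alpha>"
  then have "(1 - \<alpha>) * (d + a) \<le> (1 - \<alpha>) * B" "(2 * \<alpha> - 1) * d \<le> (2 * \<alpha> - 1) * (B - k)"
    "0 \<le> (2 * \<alpha> - 1) * k"
    using assms by (auto intro: mult_left_mono)
  then show "\<alpha> * d + (1 - \<alpha>) * a \<le> \<alpha> * B" by (simp add: algebra_simps)
qed

theorem theorem4p2: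
  fixes n k :: nat and E :: "nat \<Rightarrow> nat \<Rightarrow> bool" and \<alpha> :: real
  assumes tree: "is_tree n E"
    and k: "1 \<le> k" "k \<le> n"
    and alpha: "0 \<le> \<alpha>" "\<alpha> < 1"
  defines "\<beta> \<equiv> matching_number n E"
  shows "(\<alpha> < 1/2 \<longrightarrow>
           S_k k (A_alpha \<alpha> n E) \<le>
             (if k \<le> \<beta> then \<alpha> * (real n + 2 * real k - 2) + (1 - 2 * \<alpha>) * sqrt (real k * (real n - 1))
              else if k \<le> n - \<beta> then \<alpha> * (real n + 2 * real k - 2) + (1 - 2 * \<alpha>) * sqrt (real \<beta> * (real n - 1))
              else \<alpha> * (real n + 2 * real k - 2) + (1 - 2 * \<alpha>) * sqrt (real (n - k) * (real n - 1))))
       \<and> (1/2 \<le> \<alpha> \<longrightarrow> S_k k (A_alpha \<alpha> n E) \<le> \<alpha> * (real n + 2 * real k - 2))"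
proof -
  let ?A = "A_alpha \<alpha> n E"
  have sym: "\<And>u v. E u v \<Longrightarrow> E v u" using forest.sym[OF tree_forest[OF tree]] .
  obtain U I where U: "orthogonal_mat n U" and I: "I \<subseteq> {..<n}" "card I = k"
    and S: "S_k k ?A = col_proj_trace ?A U I"
    using S_k_eq_col_proj_trace[OF A_alpha_carrier A_alpha_symmetric[where E = E, OF sym] k(2)] by blast
  define d where "d = col_proj_trace (deg_mat n E) U I"
  define a where "a = col_proj_trace (adj_mat n E) U I"
  have S_eq: "S_k k ?A = \<alpha> * d + (1 - \<alpha>) * a"
    unfolding S unfolding A_alpha_def d_def a_def
    by (rule col_proj_trace_lincomb[OF deg_mat_carrier adj_mat_carrier])
  have "d + a \<le> real n + 2 * real k - 2" "d \<le> real n + 2 * real k - 2 - real k"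
    using tree_signless_trace_le[OF tree U I(1)] tree_deg_trace_le[OF tree U I(1)] k(1) I(2)
    unfolding d_def a_def col_proj_trace_signless_laplacian by auto
  note mix = alpha_combination_le[OF alpha this of_nat_0_le_iff]
  have "a \<le> sqrt (real k * (real n - 1))" "a \<le> sqrt (real (n - k) * (real n - 1))"
    "a \<le> sqrt (real \<beta> * (real n - 1))"
    using tree_adj_trace_le[OF tree U I(1)] unfolding a_def I(2) \<beta>_def by auto
  then show ?thesis unfolding S_eq using mix by auto
qed

end
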